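(* Let the setting, algorithm and notation be as described in the context, suppose the constraint qualification holds and the optimization problem has a nonempty solution set. Assume $\tau\in(0,(1+\sqrt5)/2)$ and that for some $\alpha\in(\tau/\min(1+\tau,1+\tau^{-1}),1]$, \[ \widehat\Sigma_f+S\succeq0,\quad H_f\succ0,\quad \tfrac12\widehat\Sigma_g+T\succeq0,\quad M_g\succ0 . \] Then, as $k\to\infty$, \[ \min_{1\le i\le k}\Big\{d^2\big(0,\partial p(x^{i+1})+\nabla f(x^{i+1})+Az^{i+1}\big)+d^2\big(0,\partial q(y^{i+1})+\nabla g(y^{i+1})+Bz^{i+1}\big)+\|A^*x^{i+1}+B^*y^{i+1}-c\|^2\Big\}=o(1/k) \] and \[ \min_{1\le i\le k}\Big|\big(p(x^i)+f(x^i)+q(y^i)+g(y^i)\big)-\big(p(\bar x)+f(\bar x)+q(\bar y)+g(\bar y)\big)\Big|=o(1/\sqrt k), \] where $(\bar x,\bar y,\bar z)$ is any KKT point, i.e. satisfies $0\in\partial p(\bar x)+\nabla f(\bar x)+A\bar z$, $0\in\partial q(\bar y)+\nabla g(\bar y)+B\bar z$, $A^*\bar x+B^*\bar y=c$.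
   Context: Let $\mathcal X,\mathcal Y,\mathcal Z$ be finite-dimensional real Euclidean spaces with inner products $\langle\cdot,\cdot\rangle$ and induced norms $\|\cdot\|$; $d(w,C)$ denotes the Euclidean distance from a point $w$ to a set $C$. Let $p:\mathcal X\to(-\infty,+\infty]$ and $q:\mathcal Y\to(-\infty,+\infty]$ be closed proper convex functions, and let $f:\mathcal X\to\mathbb R$, $g:\mathcal Y\to\mathbb R$ be convex differentiable functions with Lipschitz continuous gradients. Let $A:\mathcal Z\to\mathcal X$, $B:\mathcal Z\to\mathcal Y$ be linear maps with adjoints $A^*,B^*$, and $c\in\mathcal Z$. The optimization problem is $\min_{x,y}\{p(x)+f(x)+q(y)+g(y): A^*x+B^*y=c\}$. Constraint qualification: there is $(x_0,y_0)\in\mathrm{ri}(\mathrm{dom}(p)\times\mathrm{dom}(q))$ with $A^*x_0+B^*y_0=c$. Let $\Sigma_f,\widehat\Sigma_f$ (on $\mathcal X$) and $\Sigma_g,\widehat\Sigma_g$ (on $\mathcal Y$) be self-adjoint positive semidefinite linear operators with $\widehat\Sigma_f\succeq\Sigma_f$, $\widehat\Sigma_g\succeq\Sigma_g$, such that for all $x,x'\in\mathcal X$, $y,y'\in\mathcal Y$: $f(x')+\langle x-x',\nabla f(x')\rangle+\frac12\|x-x'\|^2_{\Sigma_f}\le f(x)\le f(x')+\langle x-x',\nabla f(x')\rangle+\frac12\|x-x'\|^2_{\widehat\Sigma_f}$ and the analogous two inequalities for $g$ with $\Sigma_g,\widehat\Sigma_g$. For a self-adjoint (possibly indefinite) operator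 $G$, $\|u\|_G^2:=\langle u,Gu\rangle$. Algorithm (Majorized iPADMM): let $\sigma>0$, $\tau>0$, and let $S:\mathcal X\to\mathcal X$, $T:\mathcal Y\to\mathcal Y$ be self-adjoint, possibly indefinite, linear operators with $\widehat\Sigma_f+S+\sigma AA^*\succeq0$ and $\widehat\Sigma_g+T+\sigma BB^*\succeq0$. Starting from $(x^0,y^0,z^0)\in\mathrm{dom}(p)\times\mathrm{dom}(q)\times\mathcal Z$, for $k=0,1,\dots$: $x^{k+1}\in\arg\min_{x}\{p(x)+\langle\nabla f(x^k),x\rangle+\frac12\|x-x^k\|^2_{\widehat\Sigma_f+S}+\langle z^k,A^*x\rangle+\frac\sigma2\|A^*x+B^*y^k-c\|^2\}$, $y^{k+1}\in\arg\min_{y}\{q(y)+\langle\nabla g(y^k),y\rangle+\frac12\|y-y^k\|^2_{\widehat\Sigma_g+T}+\langle z^k,B^*y\rangle+\frac\sigma2\|A^*x^{k+1}+B^*y-c\|^2\}$, $z^{k+1}=z^k+\tau\sigma(A^*x^{k+1}+B^*y^{k+1}-c)$ (the minimizers are assumed to exist). Notation: for $\alpha\in(0,1]$, $H_f:=\frac12\Sigma_f+S+\frac12(1-\alpha)\sigma AA^*$ and $M_g:=\frac12\Sigma_g+T+\min(\tau,1+\tau-\tau^2)\alpha\sigma BB^*$. *)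

theory Defs
  imports "HOL-Analysis.Analysis" "HOL-Library.Landau_Symbols"
begin

definition edom :: "('a \<Rightarrow> ereal) \<Rightarrow> 'a set" where
  "edom h = {x. h x < \<infinity>}"

definition proper_fun :: "('a \<Rightarrow> ereal) \<Rightarrow> bool" where
  "proper_fun h \<longleftrightarrow> (\<forall>x. h x \<noteq> -\<infinity>) \<and> edom h \<noteq> {}"

definition eepigraph :: "('a \<Rightarrow> ereal) \<Rightarrow> ('a \<times> real) set" where
  "eepigraph h = {(x, r). h x \<le> ereal r}"

definition convex_efun :: "('a::real_vector \<Rightarrow> ereal) \<Rightarrow> bool" where
  "convex_efun h \<longleftrightarrow> convex (eepigraph h)"

definition closed_efun :: "('a::topological_space \<Rightarrow> ereal) \<Rightarrow> bool" where
  "closed_efun h \<longleftrightarrow> closed (eepigraph h)"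

definition closed_proper_convex :: "('a::real_normed_vector \<Rightarrow> ereal) \<Rightarrow> bool" where
  "closed_proper_convex h \<longleftrightarrow> closed_efun h \<and> proper_fun h \<and> convex_efun h"

definition subdiff :: "('a::real_inner \<Rightarrow> ereal) \<Rightarrow> 'a \<Rightarrow> 'a set" where
  "subdiff h x = {v. h x < \<infinity> \<and> (\<forall>u. h x + ereal (v \<bullet> (u - x)) \<le> h u)}"

definition self_adjoint :: "('a::real_inner \<Rightarrow> 'a) \<Rightarrow> bool" where
  "self_adjoint G \<longleftrightarrow> linear G \<and> (\<forall>u v. G u \<bullet> v = u \<bullet> G v)"

definition qf :: "('a::real_inner \<Rightarrow> 'a) \<Rightarrow> 'a \<Rightarrow> real" where
  "qf G u = u \<bullet> G u"

definition psd :: "('a::real_inner \<Rightarrow> 'a) \<Rightarrow> bool" where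
  "psd G \<longleftrightarrow> (\<forall>u. 0 \<le> qf G u)"

definition pd :: "('a::real_inner \<Rightarrow> 'a) \<Rightarrow> bool" where
  "pd G \<longleftrightarrow> (\<forall>u. u \<noteq> 0 \<longrightarrow> 0 < qf G u)"

end

theory Submission
  imports Defs
begin

lemma self_adjoint_linear: "self_adjoint G \<Longrightarrow> linear G"
  by (simp add: self_adjoint_def)

lemma self_adjoint_add: "self_adjoint G \<Longrightarrow> self_adjoint K \<Longrightarrow> self_adjoint (\<lambda>u. G u + K u)"
  unfolding self_adjoint_def by (auto simp: linear_compose_add inner_add_left inner_add_right)

lemma qf_fun_add: "qf (\<lambda>w. F w + K w) u = qf F u + qf K u"
  by (simp add: qf_def inner_add_right)

lemma qf_add:
  assumes "self_adjoint G"
  shows "qf G (a + b) = qf G a + 2 * (G a \<bullet> b) + qf G b"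
proof -
  have l: "linear G" and s: "\<And>u v. G u \<bullet> v = u \<bullet> G v"
    using assms by (auto simp: self_adjoint_def)
  have "qf G (a + b) = a \<bullet> G a + a \<bullet> G b + b \<bullet> G a + b \<bullet> G b"
    by (simp add: qf_def linear_add[OF l] inner_add_left inner_add_right)
  with s[of a b] show ?thesis
    by (simp add: qf_def inner_commute[of b])
qed

lemma qf_scaleR: "linear G \<Longrightarrow> qf G (c *\<^sub>R a) = c\<^sup>2 * qf G a"
  by (simp add: qf_def linear_scale power2_eq_square)

lemma qf_minus: "linear G \<Longrightarrow> qf G (- a) = qf G a"
  using qf_scaleR[of G "-1" a] by simp

lemma qf_diff:
  assumes "self_adjoint G"
  shows "qf G (a - b) = qf G a - 2 * (G a \<bullet> b) + qf G b"
  using qf_add[OF assms, of a "- b"] qf_minus[OF self_adjoint_linear[OF assms], of b]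
  by (simp add: inner_minus_right)

lemma qf_polarization:
  assumes "self_adjoint G"
  shows "G d \<bullet> a = (qf G a + qf G d - qf G (a - d)) / 2"
proof -
  have "G d \<bullet> a = G a \<bullet> d"
    using assms by (simp add: self_adjoint_def inner_commute)
  then show ?thesis
    using qf_diff[OF assms, of a d] by simp
qed

lemma psd_qf_diff_le:
  assumes "self_adjoint G" "psd G"
  shows "qf G (a - b) / 2 \<le> qf G a + qf G b"
proof -
  have "0 \<le> qf G (a + b)"
    using assms(2) by (simp add: psd_def)
  then show ?thesis
    using qf_add[OF assms(1), of a b] qf_diff[OF assms(1), of a b] by simp
qed

lemma pd_coercive:
  fixes G :: "'a::euclidean_space \<Rightarrow> 'a"
  assumes l: "linear G" and pd: "pd G"
  obtains m where "m > 0" "\<And>u. m * (norm u)\<^sup>2 \<le> qf G u"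
proof -
  have cont: "continuous_on (sphere 0 1) (qf G)"
    unfolding qf_def by (intro continuous_intros linear_continuous_on linear_conv_bounded_linear[THEN iffD1, OF l])
  obtain b :: 'a where "b \<in> Basis" using nonempty_Basis by blast
  then have ne: "sphere (0::'a) 1 \<noteq> {}"
    by (auto simp: sphere_def norm_Basis intro!: exI[of _ b])
  obtain u0 where u0: "u0 \<in> sphere 0 1" and mn: "\<And>v. v \<in> sphere 0 1 \<Longrightarrow> qf G u0 \<le> qf G v"
    using continuous_attains_inf[OF compact_sphere ne cont] by blast
  have "qf G u0 * (norm u)\<^sup>2 \<le> qf G u" for u
  proof (cases "u = 0")
    case True
    then show ?thesis by (simp add: qf_def linear_0[OF l])
  next
    case False
    then have "u /\<^sub>R norm u \<in> sphere 0 1" and "qf G u = (norm u)\<^sup>2 * qf G (u /\<^sub>R norm u)"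
      using qf_scaleR[OF l, of "norm u" "u /\<^sub>R norm u"] by auto
    then show ?thesis
      using mn mult_left_mono[of _ _ "(norm u)\<^sup>2"] by (metis mult.commute zero_le_power2)
  qed
  moreover have "0 < qf G u0"
    using u0 pd unfolding pd_def by (metis mem_sphere_0 norm_zero zero_neq_one)
  ultimately show ?thesis using that by blast
qed

lemma norm_add_square: "(norm (u + v))\<^sup>2 = (norm u)\<^sup>2 + 2 * (u \<bullet> v) + (norm (v::'a::real_inner))\<^sup>2"
  unfolding power2_norm_eq_inner by (simp add: inner_add_left inner_add_right inner_commute)

lemma norm_diff_square: "(norm (u - v))\<^sup>2 = (norm u)\<^sup>2 - 2 * (u \<bullet> v) + (norm (v::'a::real_inner))\<^sup>2"
  unfolding power2_norm_eq_inner by (simp add: inner_diff_left inner_diff_right inner_commute)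

lemma convex_efunD:
  assumes "convex_efun h" "h a \<le> ereal ra" "h b \<le> ereal rb" "0 \<le> t" "t \<le> 1"
  shows "h ((1 - t) *\<^sub>R a + t *\<^sub>R b) \<le> ereal ((1 - t) * ra + t * rb)"
proof -
  have "(a, ra) \<in> eepigraph h" "(b, rb) \<in> eepigraph h"
    using assms(2,3) by (auto simp: eepigraph_def)
  then have "(1 - t) *\<^sub>R (a, ra) + t *\<^sub>R (b, rb) \<in> eepigraph h"
    using assms(1,4,5) by (intro convexD[OF assms(1)[unfolded convex_efun_def]]) auto
  then show ?thesis by (simp add: eepigraph_def)
qed

lemma
  assumes cv: "convex_efun h" and nm: "\<And>u. h u \<noteq> -\<infinity>"
    and a: "a \<in> edom h" and b: "b \<in> edom h" and t: "0 \<le> t" "t \<le> 1"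
  shows convex_efun_edom: "(1 - t) *\<^sub>R a + t *\<^sub>R b \<in> edom h"
    and convex_efun_real_of_ereal: "real_of_ereal (h ((1 - t) *\<^sub>R a + t *\<^sub>R b))
             \<le> (1 - t) * real_of_ereal (h a) + t * real_of_ereal (h b)"
proof -
  obtain ra rb where ra: "h a = ereal ra" and rb: "h b = ereal rb"
    using a b nm[of a] nm[of b] by (cases "h a"; cases "h b") (auto simp: edom_def)
  have le: "h ((1 - t) *\<^sub>R a + t *\<^sub>R b) \<le> ereal ((1 - t) * ra + t * rb)"
    using convex_efunD[OF cv _ _ t] ra rb by simp
  then obtain rc where rc: "h ((1 - t) *\<^sub>R a + t *\<^sub>R b) = ereal rc"
    using nm[of "(1 - t) *\<^sub>R a + t *\<^sub>R b"] by (cases "h ((1 - t) *\<^sub>R a + t *\<^sub>R b)") auto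
  show "(1 - t) *\<^sub>R a + t *\<^sub>R b \<in> edom h"
    using rc by (simp add: edom_def)
  show "real_of_ereal (h ((1 - t) *\<^sub>R a + t *\<^sub>R b)) \<le> (1 - t) * real_of_ereal (h a) + t * real_of_ereal (h b)"
    using le rc ra rb by simp
qed

lemma edom_ereal_real: "u \<in> edom h \<Longrightarrow> h u \<noteq> -\<infinity> \<Longrightarrow> h u = ereal (real_of_ereal (h u))"
  by (cases "h u") (auto simp: edom_def)

lemma convex_edom:
  assumes "convex_efun h" "\<And>u. h u \<noteq> -\<infinity>"
  shows "convex (edom h)"
proof (rule convexI)
  fix a b and u v :: real
  assume "a \<in> edom h" "b \<in> edom h" "0 \<le> u" "0 \<le> v" "u + v = 1"
  moreover have "u = 1 - v"
    using \<open>u + v = 1\<close> by simp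
  ultimately show "u *\<^sub>R a + v *\<^sub>R b \<in> edom h"
    using convex_efun_edom[OF assms, of a b v] by simp
qed

lemma convex_on_edom:
  assumes "convex_efun h" "\<And>u. h u \<noteq> -\<infinity>"
  shows "convex_on (edom h) (\<lambda>u. real_of_ereal (h u))"
  by (intro convex_onI convex_edom[OF assms] convex_efun_real_of_ereal[OF assms]) auto

lemma convex_on_Times_sum:
  assumes "convex_on S F" "convex_on T G"
  shows "convex_on (S \<times> T) (\<lambda>w. F (fst w) + G (snd w))"
proof (rule convex_onI)
  show "convex (S \<times> T)"
    using assms by (intro convex_Times convex_on_imp_convex)
  fix t :: real and w1 w2
  assume "0 < t" "t < 1" "w1 \<in> S \<times> T" "w2 \<in> S \<times> T"
  then show "F (fst ((1 - t) *\<^sub>R w1 + t *\<^sub>R w2)) + G (snd ((1 - t) *\<^sub>R w1 + t *\<^sub>R w2))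
      \<le> (1 - t) * (F (fst w1) + G (snd w1)) + t * (F (fst w2) + G (snd w2))"
    using convex_onD[OF assms(1), of t "fst w1" "fst w2"] convex_onD[OF assms(2), of t "snd w1" "snd w2"]
    by (auto simp: algebra_simps)
qed

lemma nonneg_if_nonneg_plus_small_multiples:
  fixes X C :: real
  assumes "\<And>t. 0 < t \<Longrightarrow> t \<le> 1 \<Longrightarrow> 0 \<le> X + t * C"
  shows "0 \<le> X"
proof (rule ccontr)
  assume "\<not> 0 \<le> X"
  then have X: "X < 0" by simp
  define t where "t = min 1 (- X / (2 * \<bar>C\<bar> + 1))"
  have t: "0 < t" "t \<le> 1" "t \<le> - X / (2 * \<bar>C\<bar> + 1)"
    using X unfolding t_def by (auto simp: divide_neg_pos)
  have "t * C \<le> t * \<bar>C\<bar>"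
    using t by (simp add: mult_left_mono)
  also have "\<dots> \<le> - X / (2 * \<bar>C\<bar> + 1) * \<bar>C\<bar>"
    using t(3) by (rule mult_right_mono) simp
  also have "\<dots> = - X * (\<bar>C\<bar> / (2 * \<bar>C\<bar> + 1))"
    by simp
  also have "\<dots> \<le> - X * (1 / 2)"
    using X by (intro mult_left_mono) (auto simp: divide_simps)
  finally show False
    using assms[OF t(1,2)] X by linarith
qed

lemma subdiff_of_minimizer:
  fixes h :: "'a::real_inner \<Rightarrow> real"
  assumes cv: "convex_efun p" and nm: "\<And>u. p u \<noteq> -\<infinity>" and fin: "p xm < \<infinity>"
    and mn: "\<And>u. p xm + ereal (h xm) \<le> p u + ereal (h u)"
    and up: "\<And>t d. 0 < t \<Longrightarrow> t \<le> 1 \<Longrightarrow> h (xm + t *\<^sub>R d) \<le> h xm + t * (gv \<bullet> d) + t\<^sup>2 * C d"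
  shows "- gv \<in> subdiff p xm"
proof -
  obtain pm where pm: "p xm = ereal pm"
    using fin nm[of xm] by (cases "p xm") auto
  have "p xm + ereal (- gv \<bullet> (u - xm)) \<le> p u" for u
  proof (cases "p u = \<infinity>")
    case True
    then show ?thesis by (simp add: pm)
  next
    case False
    then obtain pu where pu: "p u = ereal pu"
      using nm[of u] by (cases "p u") auto
    define d where "d = u - xm"
    have "0 \<le> (pu - pm + gv \<bullet> d) + t * C d" if t: "0 < t" "t \<le> 1" for t
    proof -
      have "xm + t *\<^sub>R d = (1 - t) *\<^sub>R xm + t *\<^sub>R u"
        by (simp add: d_def algebra_simps)
      then have conv: "p (xm + t *\<^sub>R d) \<le> ereal ((1 - t) * pm + t * pu)"
        using convex_efunD[OF cv _ _ less_imp_le[OF t(1)] t(2), of xm pm u pu] pm pu by simp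
      have "ereal (pm + h xm) = p xm + ereal (h xm)"
        by (simp add: pm)
      also have "\<dots> \<le> p (xm + t *\<^sub>R d) + ereal (h (xm + t *\<^sub>R d))"
        by (rule mn)
      also have "\<dots> \<le> ereal ((1 - t) * pm + t * pu) + ereal (h (xm + t *\<^sub>R d))"
        using conv by (rule add_right_mono)
      finally have "pm + h xm \<le> (1 - t) * pm + t * pu + h (xm + t *\<^sub>R d)"
        by simp
      then have "0 \<le> t * (pu - pm + gv \<bullet> d) + t\<^sup>2 * C d"
        using up[OF t, of d] by (simp add: algebra_simps)
      also have "\<dots> = t * ((pu - pm + gv \<bullet> d) + t * C d)"
        by (simp add: algebra_simps power2_eq_square)
      finally show ?thesis
        using t by (simp add: zero_le_mult_iff)
    qed
    then have "0 \<le> pu - pm + gv \<bullet> d"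
      by (rule nonneg_if_nonneg_plus_small_multiples)
    then show ?thesis
      using pm pu by (simp add: d_def inner_minus_left)
  qed
  then show ?thesis
    using fin by (simp add: subdiff_def)
qed

lemma subdiff_finite_value:
  assumes "v \<in> subdiff h a" "h a \<noteq> -\<infinity>"
  obtains r where "h a = ereal r"
proof -
  have "h a < \<infinity>"
    using assms(1) by (simp add: subdiff_def)
  then show ?thesis
    using that assms(2) by (cases "h a") auto
qed

lemma subdiff_monotone:
  assumes v1: "v1 \<in> subdiff h a" and v2: "v2 \<in> subdiff h b" and nm: "\<And>u. h u \<noteq> -\<infinity>"
  shows "0 \<le> (v1 - v2) \<bullet> (a - b)"
proof -
  obtain ha hb where ha: "h a = ereal ha" and hb: "h b = ereal hb"
    using subdiff_finite_value[OF v1 nm] subdiff_finite_value[OF v2 nm] by metis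
  have "h a + ereal (v1 \<bullet> (b - a)) \<le> h b" "h b + ereal (v2 \<bullet> (a - b)) \<le> h a"
    using v1 v2 unfolding subdiff_def by blast+
  then have "ha + v1 \<bullet> (b - a) \<le> hb" "hb + v2 \<bullet> (a - b) \<le> ha"
    using ha hb by simp_all
  then show ?thesis
    by (simp add: inner_diff_left inner_diff_right)
qed


lemma majorized_gradient_three_point:
  fixes f :: "'a::real_inner \<Rightarrow> real"
  assumes lo: "\<And>u u'. f u' + (u - u') \<bullet> gf u' + qf Sf (u - u') / 2 \<le> f u"
    and up: "\<And>u u'. f u \<le> f u' + (u - u') \<bullet> gf u' + qf Shf (u - u') / 2"
    and "linear Sf"
  shows "qf Sf (x1 - xb) / 2 + qf Sf (x0 - xb) / 2 - qf Shf (x1 - x0) / 2 \<le> (gf x0 - gf xb) \<bullet> (x1 - xb)"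
proof -
  have "f x0 + (xb - x0) \<bullet> gf x0 + qf Sf (x0 - xb) / 2 \<le> f xb"
    using lo[where u=xb and u'=x0] qf_minus[OF \<open>linear Sf\<close>, of "x0 - xb"] by simp
  moreover have "f xb + (x1 - xb) \<bullet> gf xb + qf Sf (x1 - xb) / 2 \<le> f x1"
    by (rule lo)
  moreover have "f x1 \<le> f x0 + (x1 - x0) \<bullet> gf x0 + qf Shf (x1 - x0) / 2"
    by (rule up)
  moreover have "(gf x0 - gf xb) \<bullet> (x1 - xb) = (x1 - x0) \<bullet> gf x0 - (xb - x0) \<bullet> gf x0 - (x1 - xb) \<bullet> gf xb"
    by (simp add: inner_diff_left inner_diff_right inner_commute)
  ultimately show ?thesis by linarith
qed

text \<open>Co-coercivity-type bound, obtained by comparing \<open>f\<close> at the midpoint-shifted points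
  \<open>a + u\<close> and \<open>b - u\<close> with \<open>u = ((c - a) - (a - b)) / 2\<close>.\<close>

lemma majorized_gradient_lower_bound:
  fixes f :: "'a::real_inner \<Rightarrow> real"
  assumes lo: "\<And>u u'. f u' + (u - u') \<bullet> gf u' + qf Sf (u - u') / 2 \<le> f u"
    and up: "\<And>u u'. f u \<le> f u' + (u - u') \<bullet> gf u' + qf Shf (u - u') / 2"
    and "psd Sf" "linear Shf"
  shows "- qf Shf ((c - a) - (a - b)) / 4 \<le> (gf a - gf b) \<bullet> (c - a)"
proof -
  define u where "u = (1/2) *\<^sub>R ((c - a) - (a - b))"
  have qu: "qf Shf u = qf Shf ((c - a) - (a - b)) / 4"
    unfolding u_def qf_scaleR[OF \<open>linear Shf\<close>] by (simp add: power2_eq_square)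
  have Sf0: "\<And>v. 0 \<le> qf Sf v"
    using \<open>psd Sf\<close> by (simp add: psd_def)
  have "f b + (a + u - b) \<bullet> gf b \<le> f (a + u)"
    using lo[where u="a + u" and u'=b] Sf0[of "a + u - b"] by linarith
  moreover have "f (a + u) \<le> f a + u \<bullet> gf a + qf Shf u / 2"
    using up[where u="a + u" and u'=a] by simp
  moreover have "f a + (b - u - a) \<bullet> gf a \<le> f (b - u)"
    using lo[where u="b - u" and u'=a] Sf0[of "b - u - a"] by linarith
  moreover have "f (b - u) \<le> f b - u \<bullet> gf b + qf Shf u / 2"
    using up[where u="b - u" and u'=b] qf_minus[OF \<open>linear Shf\<close>, of u] by simp
  moreover have "c - a = (a - b) + 2 *\<^sub>R u"
    by (simp add: u_def algebra_simps)
  then have "(gf a - gf b) \<bullet> (c - a)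
      = a \<bullet> gf a - a \<bullet> gf b - b \<bullet> gf a + b \<bullet> gf b + 2 * (u \<bullet> gf a) - 2 * (u \<bullet> gf b)"
    by (simp add: inner_add_right inner_diff_right inner_diff_left inner_commute)
  ultimately show ?thesis
    using qu by (simp add: inner_add_left inner_diff_left)
qed

lemma summable_eventually_small_term:
  fixes a :: "nat \<Rightarrow> real"
  assumes nn: "\<And>i. 0 \<le> a i" and sm: "summable a" and c: "0 < c"
  shows "eventually (\<lambda>k. \<exists>i\<in>{1..k}. a i \<le> c / real k) sequentially"
proof -
  obtain N where N: "\<And>n. n \<ge> N \<Longrightarrow> norm (\<Sum>i. a (i + n)) < c / 2"
    using suminf_exist_split[of "c / 2" a] c sm by auto
  have "\<exists>i\<in>{1..k}. a i \<le> c / real k" if k: "k \<ge> 2 * N + 2" for k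
  proof (rule ccontr)
    assume "\<not> ?thesis"
    then have big: "\<And>i. i \<in> {1..k} \<Longrightarrow> c / real k < a i"
      by force
    define m where "m = k div 2"
    have m: "m \<ge> 1" "m \<ge> N" "real k \<le> 2 * real (k - m)"
      using k unfolding m_def by linarith+
    have "c / 2 \<le> real (k - m) * (c / real k)"
      using m(3) c k by (simp add: field_simps)
    also have "\<dots> \<le> (\<Sum>n<k - m. a (n + m))"
      using big m(1) by (intro order_trans[OF _ sum_bounded_below[of "{..<k - m}" "c / real k"]])
        (auto intro: less_imp_le)
    also have "\<dots> \<le> (\<Sum>n. a (n + m))"
      using sm nn by (intro sum_le_suminf) (auto simp: summable_iff_shift)
    also have "\<dots> < c / 2"
      using N[OF m(2)] by simp
    finally show False by simp
  qed
  then show ?thesis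
    unfolding eventually_sequentially by blast
qed

lemma Min_smallo_inverse:
  fixes a b :: "nat \<Rightarrow> real"
  assumes a: "\<And>i. 0 \<le> a i" "summable a"
    and b: "\<And>i. 0 \<le> b i" "\<And>i. 1 \<le> i \<Longrightarrow> b i \<le> C * a i"
  shows "(\<lambda>k. Min (b ` {1..k})) \<in> o(\<lambda>k. 1 / real k)"
proof (rule landau_o.smallI)
  fix e :: real
  assume "0 < e"
  define C' where "C' = max C 1"
  have C': "0 < C'" "\<And>i. 1 \<le> i \<Longrightarrow> b i \<le> C' * a i"
    unfolding C'_def using b(2) a(1) by (fastforce, meson max.cobounded1 mult_right_mono order_trans)
  have "eventually (\<lambda>k. \<exists>i\<in>{1..k}. a i \<le> (e / C') / real k) sequentially"
    using \<open>0 < e\<close> C' by (intro summable_eventually_small_term a) simp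
  then show "eventually (\<lambda>k. norm (Min (b ` {1..k})) \<le> e * norm (1 / real k)) sequentially"
  proof eventually_elim
    case (elim k)
    then obtain i where i: "i \<in> {1..k}" "a i \<le> (e / C') / real k"
      by blast
    have "0 \<le> Min (b ` {1..k})"
      using i b(1) by auto
    moreover have "Min (b ` {1..k}) \<le> C' * ((e / C') / real k)"
      using i C' by (intro order_trans[OF Min_le order_trans[OF C'(2)]] mult_left_mono) auto
    ultimately show ?case
      using C' by simp
  qed
qed

lemma Min_smallo_inverse_sqrt:
  fixes a b :: "nat \<Rightarrow> real"
  assumes a: "\<And>i. 0 \<le> a i" "summable a"
    and b: "\<And>i. 0 \<le> b i" "\<And>i. 1 \<le> i \<Longrightarrow> b i \<le> C * sqrt (a i)"
  shows "(\<lambda>k. Min (b ` {1..k})) \<in> o(\<lambda>k. 1 / sqrt (real k))"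
proof (rule landau_o.smallI)
  fix e :: real
  assume "0 < e"
  define C' where "C' = max C 1"
  have C': "0 < C'" "\<And>i. 1 \<le> i \<Longrightarrow> b i \<le> C' * sqrt (a i)"
    unfolding C'_def using b(2) a(1) by (fastforce, meson max.cobounded1 mult_right_mono real_sqrt_ge_zero order_trans)
  have "eventually (\<lambda>k. \<exists>i\<in>{1..k}. a i \<le> (e / C')\<^sup>2 / real k) sequentially"
    using \<open>0 < e\<close> C' by (intro summable_eventually_small_term a) simp
  then show "eventually (\<lambda>k. norm (Min (b ` {1..k})) \<le> e * norm (1 / sqrt (real k))) sequentially"
  proof eventually_elim
    case (elim k)
    then obtain i where i: "i \<in> {1..k}" "a i \<le> (e / C')\<^sup>2 / real k"
      by blast
    have "0 \<le> Min (b ` {1..k})"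
      using i b(1) by auto
    moreover have "Min (b ` {1..k}) \<le> C' * sqrt ((e / C')\<^sup>2 / real k)"
      using i C' by (intro order_trans[OF Min_le order_trans[OF C'(2)]] mult_left_mono real_sqrt_le_mono) auto
    moreover have "C' * sqrt ((e / C')\<^sup>2 / real k) = e / sqrt (real k)"
      using C' \<open>0 < e\<close> by (simp add: real_sqrt_divide)
    ultimately show ?case
      by simp
  qed
qed


lemma convex_constraint_value_set:
  fixes L :: "'w::euclidean_space \<Rightarrow> 'z::euclidean_space" and \<phi> :: "'w \<Rightarrow> real"
  assumes L: "linear L" and \<phi>: "convex_on D \<phi>"
  shows "convex {(L w - c, t) | w t. w \<in> D \<and> \<phi> w < t}"
proof (rule convexI)
  fix X Y and u v :: real
  assume "X \<in> {(L w - c, t) | w t. w \<in> D \<and> \<phi> w < t}" "Y \<in> {(L w - c, t) | w t. w \<in> D \<and> \<phi> w < t}"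
    and uv: "0 \<le> u" "0 \<le> v" "u + v = 1"
  then obtain w1 t1 w2 t2 where 1: "X = (L w1 - c, t1)" "w1 \<in> D" "\<phi> w1 < t1"
    and 2: "Y = (L w2 - c, t2)" "w2 \<in> D" "\<phi> w2 < t2"
    by blast
  have u: "u = 1 - v"
    using uv(3) by simp
  define w where "w = u *\<^sub>R w1 + v *\<^sub>R w2"
  have "w \<in> D"
    unfolding w_def by (rule convexD[OF convex_on_imp_convex[OF \<phi>] 1(2) 2(2) uv])
  moreover have "\<phi> w \<le> u * \<phi> w1 + v * \<phi> w2"
    using convex_onD[OF \<phi>, of v w1 w2] 1(2) 2(2) uv by (simp add: w_def u)
  moreover have "u * \<phi> w1 + v * \<phi> w2 < u * t1 + v * t2"
  proof (cases "u = 0")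
    case False
    then show ?thesis
      using 1(3) 2(3) uv by (intro add_less_le_mono mult_strict_left_mono mult_left_mono) auto
  qed (use 2(3) uv in simp)
  moreover have "u *\<^sub>R (L w1 - c) + v *\<^sub>R (L w2 - c) = L w - c"
    using uv by (simp add: w_def linear_add[OF L] linear_scale[OF L] algebra_simps flip: scaleR_add_left)
  ultimately show "u *\<^sub>R X + v *\<^sub>R Y \<in> {(L w - c, t) | w t. w \<in> D \<and> \<phi> w < t}"
    using 1(1) 2(1) by (intro CollectI exI[of _ w] exI[of _ "u * t1 + v * t2"]) auto
qed

text \<open>Moving from a point of the value set through the image of a relative-interior feasible
  point \<open>w0\<close>: the segment can be prolonged past \<open>(0, \<phi> w0 + 1)\<close> because \<open>w0\<close> can be moved
  beyond itself inside \<open>D\<close>, and the slack \<open>1\<close> absorbs the change of \<open>\<phi>\<close> for small steps.\<close>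

lemma constraint_value_set_prolong:
  fixes L :: "'w::euclidean_space \<Rightarrow> 'z::euclidean_space" and \<phi> :: "'w \<Rightarrow> real"
  assumes L: "linear L" and \<phi>: "convex_on D \<phi>" and w0: "w0 \<in> rel_interior D" and Lw0: "L w0 = c"
    and w: "w \<in> D" "\<phi> w < t"
  shows "\<exists>e>1. (1 - e) *\<^sub>R (L w - c, t) + e *\<^sub>R (0, \<phi> w0 + 1) \<in> {(L w - c, t) | w t. w \<in> D \<and> \<phi> w < t}"
proof -
  define t0 where "t0 = \<phi> w0 + 1"
  have w0D: "w0 \<in> D"
    using w0 rel_interior_subset by blast
  obtain m where m: "m > 1" "\<And>e. e > 1 \<Longrightarrow> e \<le> m \<Longrightarrow> (1 - e) *\<^sub>R w + e *\<^sub>R w0 \<in> D"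
    using convex_rel_interior_if[OF convex_on_imp_convex[OF \<phi>] w0] hull_inc[OF w(1)] by blast
  define wm where "wm = (1 - m) *\<^sub>R w + m *\<^sub>R w0"
  have wmD: "wm \<in> D"
    unfolding wm_def using m by simp
  define Q where "Q = (\<phi> wm - \<phi> w0) / (m - 1)"
  define \<Gamma> where "\<Gamma> = (t0 - t) - Q"
  define \<delta> where "\<delta> = min (m - 1) (1 / (2 * \<bar>\<Gamma>\<bar> + 1))"
  have \<delta>: "0 < \<delta>" "\<delta> \<le> m - 1" "\<delta> * \<bar>\<Gamma>\<bar> \<le> 1 / 2"
    unfolding \<delta>_def using m by (auto simp: min_def field_simps)
  define e where "e = 1 + \<delta>"
  define l where "l = \<delta> / (m - 1)"
  have l: "0 \<le> l" "l \<le> 1" "l * (m - 1) = \<delta>"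
    unfolding l_def using \<delta> m by auto
  have "(1 - l) *\<^sub>R w0 + l *\<^sub>R wm = (1 - l + l * m) *\<^sub>R w0 + (l * (1 - m)) *\<^sub>R w"
    unfolding wm_def by (simp add: algebra_simps)
  also have "\<dots> = e *\<^sub>R w0 + (1 - e) *\<^sub>R w"
    using l(3) unfolding e_def by (simp add: algebra_simps)
  finally have we: "(1 - e) *\<^sub>R w + e *\<^sub>R w0 = (1 - l) *\<^sub>R w0 + l *\<^sub>R wm"
    by (simp add: add.commute)
  have weD: "(1 - e) *\<^sub>R w + e *\<^sub>R w0 \<in> D"
    using m(2)[of e] \<delta> unfolding e_def by simp
  have "\<phi> ((1 - e) *\<^sub>R w + e *\<^sub>R w0) \<le> (1 - l) * \<phi> w0 + l * \<phi> wm"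
    unfolding we by (rule convex_onD[OF \<phi> l(1,2) w0D wmD])
  also have "\<dots> = \<phi> w0 + \<delta> * Q"
    unfolding l_def Q_def by (simp add: algebra_simps diff_divide_distrib)
  also have "\<dots> < (1 - e) * t + e * t0"
  proof -
    have "- (\<delta> * \<bar>\<Gamma>\<bar>) \<le> \<delta> * \<Gamma>"
      using mult_left_mono[of "- \<bar>\<Gamma>\<bar>" \<Gamma> \<delta>] \<delta>(1) by simp
    moreover have "\<delta> * \<Gamma> = \<delta> * (t0 - t) - \<delta> * Q" "(1 - e) * t + e * t0 = t0 + \<delta> * (t0 - t)"
      by (simp_all add: \<Gamma>_def e_def algebra_simps)
    ultimately show ?thesis
      using \<delta>(3) unfolding t0_def by linarith
  qed
  finally have "\<phi> ((1 - e) *\<^sub>R w + e *\<^sub>R w0) < (1 - e) * t + e * t0" .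
  moreover have "(1 - e) *\<^sub>R (L w - c) = L ((1 - e) *\<^sub>R w + e *\<^sub>R w0) - c"
    unfolding linear_add[OF L] linear_scale[OF L] Lw0 by (simp add: algebra_simps)
  then have "(1 - e) *\<^sub>R (L w - c, t) + e *\<^sub>R (0, t0)
      = (L ((1 - e) *\<^sub>R w + e *\<^sub>R w0) - c, (1 - e) * t + e * t0)"
    by simp
  ultimately have "(1 - e) *\<^sub>R (L w - c, t) + e *\<^sub>R (0, t0) \<in> {(L w - c, t) | w t. w \<in> D \<and> \<phi> w < t}"
    using weD by blast
  moreover have "e > 1"
    unfolding e_def using \<delta>(1) by simp
  ultimately show ?thesis
    unfolding t0_def by blast
qed

lemma rel_interior_constraint_value_set:
  fixes L :: "'w::euclidean_space \<Rightarrow> 'z::euclidean_space" and \<phi> :: "'w \<Rightarrow> real"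
  assumes L: "linear L" and \<phi>: "convex_on D \<phi>" and w0: "w0 \<in> rel_interior D" "L w0 = c"
  shows "(0, \<phi> w0 + 1) \<in> rel_interior {(L w - c, t) | w t. w \<in> D \<and> \<phi> w < t}"
proof -
  let ?K = "{(L w - c, t) | w t. w \<in> D \<and> \<phi> w < t}"
  have "w0 \<in> D"
    using w0(1) rel_interior_subset by blast
  then have "?K \<noteq> {}"
    by (metis (mono_tags, lifting) empty_iff less_add_one mem_Collect_eq)
  moreover have "\<forall>X\<in>?K. \<exists>e>1. (1 - e) *\<^sub>R X + e *\<^sub>R (0, \<phi> w0 + 1) \<in> ?K"
  proof
    fix X
    assume "X \<in> ?K"
    then obtain w t where "X = (L w - c, t)" "w \<in> D" "\<phi> w < t"
      by blast
    then show "\<exists>e>1. (1 - e) *\<^sub>R X + e *\<^sub>R (0, \<phi> w0 + 1) \<in> ?K"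
      using constraint_value_set_prolong[OF L \<phi> w0] by simp
  qed
  ultimately show ?thesis
    using convex_rel_interior_only_if[OF convex_constraint_value_set[OF L \<phi>]] by blast
qed

text \<open>Separating \<open>(0, 0)\<close> from the convex value set; the constraint qualification makes the
  hyperplane non-vertical.\<close>

lemma constraint_value_set_separation:
  fixes L :: "'w::euclidean_space \<Rightarrow> 'z::euclidean_space" and \<phi> :: "'w \<Rightarrow> real"
  assumes L: "linear L" and \<phi>: "convex_on D \<phi>"
    and w0: "w0 \<in> rel_interior D" "L w0 = c"
    and opt: "\<And>w. w \<in> D \<Longrightarrow> L w = c \<Longrightarrow> 0 \<le> \<phi> w"
    and ws: "ws \<in> D" "L ws = c" "\<phi> ws = 0"
  shows "\<exists>\<zeta> \<eta>. 0 < \<eta> \<and> (\<forall>w t. w \<in> D \<longrightarrow> \<phi> w < t \<longrightarrow> 0 \<le> \<zeta> \<bullet> (L w - c) + \<eta> * t)"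
proof -
  let ?K = "{(L w - c, t) | w t. w \<in> D \<and> \<phi> w < t}"
  have inK: "(L w - c, t) \<in> ?K" if "w \<in> D" "\<phi> w < t" for w t
    using that by blast
  have "(0, 0) \<in> closure ?K"
    unfolding closure_approachable
  proof (intro allI impI)
    fix e :: real
    assume "e > 0"
    then have "(0, e / 2) \<in> ?K" "dist (0::'z, e / 2) (0, 0) < e"
      using inK[OF ws(1), of "e / 2"] ws by (simp_all add: dist_Pair_Pair)
    then show "\<exists>y\<in>?K. dist y (0, 0) < e" by blast
  qed
  moreover have "(0, 0) \<notin> ?K"
  proof
    assume "(0, 0) \<in> ?K"
    then obtain w t where "(0, 0) = (L w - c, t)" "w \<in> D" "\<phi> w < t"
      by blast
    then show False
      using opt[of w] by simp
  qed
  then have "(0, 0) \<notin> rel_interior ?K"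
    using rel_interior_subset by blast
  ultimately obtain a where
      sep: "\<And>y. y \<in> closure ?K \<Longrightarrow> a \<bullet> (0, 0) \<le> a \<bullet> y"
      and strict: "\<And>y. y \<in> rel_interior ?K \<Longrightarrow> a \<bullet> (0, 0) < a \<bullet> y"
    using supporting_hyperplane_relative_frontier[OF convex_constraint_value_set[OF L \<phi>]]
    by blast
  obtain \<zeta> \<eta> where a: "a = (\<zeta>, \<eta>)"
    by (cases a)
  have sepK: "0 \<le> \<zeta> \<bullet> (L w - c) + \<eta> * t" if "w \<in> D" "\<phi> w < t" for w t
    using sep[OF closure_subset[THEN subsetD, OF inK[OF that]]] a by simp
  have "0 < \<eta> * (\<phi> w0 + 1)"
    using strict[OF rel_interior_constraint_value_set[OF L \<phi> w0]] a by fastforce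
  moreover have "0 \<le> \<eta>"
    using sepK[OF ws(1), of 1] ws by simp
  ultimately have "0 < \<eta>"
    by (cases "\<eta> = 0") auto
  then show ?thesis
    using sepK by blast
qed

lemma lagrange_multiplier_exists:
  fixes L :: "'w::euclidean_space \<Rightarrow> 'z::euclidean_space" and \<phi> :: "'w \<Rightarrow> real"
  assumes L: "linear L" and \<phi>: "convex_on D \<phi>"
    and w0: "w0 \<in> rel_interior D" "L w0 = c"
    and opt: "\<And>w. w \<in> D \<Longrightarrow> L w = c \<Longrightarrow> 0 \<le> \<phi> w"
    and ws: "ws \<in> D" "L ws = c" "\<phi> ws = 0"
  obtains zb where "\<And>w. w \<in> D \<Longrightarrow> 0 \<le> zb \<bullet> (L w - c) + \<phi> w"
proof -
  obtain \<zeta> \<eta> where \<eta>: "0 < \<eta>" and sep: "\<forall>w t. w \<in> D \<longrightarrow> \<phi> w < t \<longrightarrow> 0 \<le> \<zeta> \<bullet> (L w - c) + \<eta> * t"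
    using constraint_value_set_separation[OF L \<phi> w0 opt ws] by blast
  have "0 \<le> (1 / \<eta>) *\<^sub>R \<zeta> \<bullet> (L w - c) + \<phi> w" if "w \<in> D" for w
  proof (rule ccontr)
    define s where "s = (1 / \<eta>) *\<^sub>R \<zeta> \<bullet> (L w - c) + \<phi> w"
    assume "\<not> 0 \<le> s"
    then have "0 \<le> \<zeta> \<bullet> (L w - c) + \<eta> * (\<phi> w - s / 2)"
      using sep that by auto
    also have "\<zeta> \<bullet> (L w - c) + \<eta> * (\<phi> w - s / 2) = \<eta> * (s / 2)"
      using \<eta> by (simp add: s_def field_simps)
    finally show False
      using \<eta> \<open>\<not> 0 \<le> s\<close> by (simp add: zero_le_mult_iff)
  qed
  then show ?thesis
    using that by blast
qed

lemma infdist_shifted_image_square_le: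
  "v \<in> S \<Longrightarrow> (infdist 0 ((\<lambda>u. u + a + b) ` S))\<^sup>2 \<le> (norm (v + a + b))\<^sup>2"
  using infdist_le[OF imageI, of v S 0 "\<lambda>u. u + a + b"]
  by (simp only: dist_0_norm power_mono infdist_nonneg)

lemma zero_in_shifted_image_iff:
  fixes a b :: "'a::ab_group_add"
  shows "0 \<in> (\<lambda>v. v + a + b) ` S \<longleftrightarrow> - (a + b) \<in> S"
proof -
  have "\<And>v. 0 = v + a + b \<longleftrightarrow> v = - (a + b)"
    by (metis add.assoc eq_neg_iff_add_eq_0)
  then show ?thesis
    unfolding image_iff by simp
qed

lemma subdiff_of_smooth_minimizer:
  fixes f :: "'a::real_inner \<Rightarrow> real"
  assumes cv: "convex_efun p" and nm: "\<And>u. p u \<noteq> -\<infinity>" and fin: "p xm < \<infinity>"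
    and mn: "\<And>u. p xm + ereal (f xm + a \<bullet> xm) \<le> p u + ereal (f u + a \<bullet> u)"
    and up: "\<And>u u'. f u \<le> f u' + (u - u') \<bullet> gf u' + qf Shf (u - u') / 2" and "linear Shf"
  shows "- (gf xm + a) \<in> subdiff p xm"
proof (rule subdiff_of_minimizer[OF cv nm fin, where h="\<lambda>u. f u + a \<bullet> u" and C="\<lambda>d. qf Shf d / 2"])
  show "p xm + ereal (f xm + a \<bullet> xm) \<le> p u + ereal (f u + a \<bullet> u)" for u
    by (rule mn)
  fix t :: real and d
  have "f (xm + t *\<^sub>R d) \<le> f xm + (xm + t *\<^sub>R d - xm) \<bullet> gf xm + qf Shf (xm + t *\<^sub>R d - xm) / 2"
    by (rule up)
  also have "\<dots> = f xm + t * (d \<bullet> gf xm) + t\<^sup>2 * (qf Shf d / 2)"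
    using qf_scaleR[OF \<open>linear Shf\<close>, of t d] by simp
  finally show "f (xm + t *\<^sub>R d) + a \<bullet> (xm + t *\<^sub>R d)
      \<le> f xm + a \<bullet> xm + t * ((gf xm + a) \<bullet> d) + t\<^sup>2 * (qf Shf d / 2)"
    by (simp add: inner_add_left inner_add_right inner_commute algebra_simps)
qed

lemma subdiff_of_partial_minimizer:
  fixes f :: "'a::real_inner \<Rightarrow> real"
  assumes cv: "convex_efun p" and nm: "\<And>u. p u \<noteq> -\<infinity>" and xs: "xs \<in> edom p"
    and mn: "\<And>u. u \<in> edom p \<Longrightarrow> real_of_ereal (p xs) + f xs + a \<bullet> xs \<le> real_of_ereal (p u) + f u + a \<bullet> u"
    and up: "\<And>u u'. f u \<le> f u' + (u - u') \<bullet> gf u' + qf Shf (u - u') / 2" and "linear Shf"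
  shows "- (gf xs + a) \<in> subdiff p xs"
proof (rule subdiff_of_smooth_minimizer[OF cv nm _ _ up \<open>linear Shf\<close>])
  show "p xs < \<infinity>"
    using xs by (simp add: edom_def)
  show "p xs + ereal (f xs + a \<bullet> xs) \<le> p u + ereal (f u + a \<bullet> u)" for u
  proof (cases "u \<in> edom p")
    case True
    then show ?thesis
      using mn[OF True] edom_ereal_real[OF xs nm] edom_ereal_real[OF True nm]
      by (metis add.assoc ereal_less_eq(3) plus_ereal.simps(1))
  next
    case False
    then show ?thesis
      using edom_ereal_real[OF xs nm] by (simp add: edom_def)
  qed
qed

lemma kkt_point_exists:
  fixes p :: "'x::euclidean_space \<Rightarrow> ereal" and q :: "'y::euclidean_space \<Rightarrow> ereal"
    and A :: "'z::euclidean_space \<Rightarrow> 'x" and B :: "'z \<Rightarrow> 'y"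
  assumes p: "convex_efun p" "\<And>u. p u \<noteq> -\<infinity>" and q: "convex_efun q" "\<And>v. q v \<noteq> -\<infinity>"
    and f: "convex_on UNIV f" "\<And>u u'. f u \<le> f u' + (u - u') \<bullet> gf u' + qf Shf (u - u') / 2" "linear Shf"
    and g: "convex_on UNIV g" "\<And>v v'. g v \<le> g v' + (v - v') \<bullet> gg v' + qf Shg (v - v') / 2" "linear Shg"
    and A_lin: "linear A" and B_lin: "linear B"
    and CQ: "\<exists>x0 y0. (x0, y0) \<in> rel_interior (edom p \<times> edom q) \<and> adjoint A x0 + adjoint B y0 = c"
    and sol: "\<exists>xs ys. adjoint A xs + adjoint B ys = c \<and>
               (\<forall>u v. adjoint A u + adjoint B v = c \<longrightarrow>
                  p xs + ereal (f xs) + q ys + ereal (g ys) \<le> p u + ereal (f u) + q v + ereal (g v))"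
  obtains xb yb zb where "0 \<in> (\<lambda>v. v + gf xb + A zb) ` subdiff p xb"
    "0 \<in> (\<lambda>w. w + gg yb + B zb) ` subdiff q yb" "adjoint A xb + adjoint B yb = c"
proof -
  obtain xs ys where fs: "adjoint A xs + adjoint B ys = c" and opt: "\<And>u v. adjoint A u + adjoint B v = c \<Longrightarrow>
      p xs + ereal (f xs) + q ys + ereal (g ys) \<le> p u + ereal (f u) + q v + ereal (g v)"
    using sol by blast
  obtain x0 y0 where ri0: "(x0, y0) \<in> rel_interior (edom p \<times> edom q)" and f0: "adjoint A x0 + adjoint B y0 = c"
    using CQ by blast
  define P where "P u = real_of_ereal (p u)" for u
  define Q where "Q v = real_of_ereal (q v)" for v
  have pP: "\<And>u. u \<in> edom p \<Longrightarrow> p u = ereal (P u)"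
    unfolding P_def by (rule edom_ereal_real[where h=p, OF _ p(2)])
  have qQ: "\<And>v. v \<in> edom q \<Longrightarrow> q v = ereal (Q v)"
    unfolding Q_def by (rule edom_ereal_real[where h=q, OF _ q(2)])
  have "x0 \<in> edom p" "y0 \<in> edom q"
    using ri0 rel_interior_subset by auto
  then have "p xs + ereal (f xs) + q ys + ereal (g ys) \<le> ereal (P x0 + f x0 + Q y0 + g y0)"
    using opt[OF f0] pP qQ by simp
  then have "p xs \<noteq> \<infinity> \<and> q ys \<noteq> \<infinity>"
    using p(2)[of xs] q(2)[of ys] by (cases "p xs"; cases "q ys") auto
  then have xs: "xs \<in> edom p" and ys: "ys \<in> edom q"
    by (auto simp: edom_def)
  define L where "L w = adjoint A (fst w) + adjoint B (snd w)" for w :: "'x \<times> 'y"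
  define \<phi> where "\<phi> w = (P (fst w) + f (fst w)) + (Q (snd w) + g (snd w)) - (P xs + f xs + Q ys + g ys)"
    for w :: "'x \<times> 'y"
  have L: "linear L"
    unfolding L_def using adjoint_linear[OF A_lin] adjoint_linear[OF B_lin]
    by (intro linear_compose_add linear_compose[OF linear_fst, unfolded o_def] linear_compose[OF linear_snd, unfolded o_def])
  have "convex_on (edom p) (\<lambda>u. P u + f u)" "convex_on (edom q) (\<lambda>v. Q v + g v)"
    unfolding P_def Q_def using convex_on_edom[OF p] convex_on_edom[OF q]
      convex_on_subset[OF f(1) _ convex_edom[OF p]] convex_on_subset[OF g(1) _ convex_edom[OF q]]
    by (simp_all add: convex_on_add)
  then have \<phi>: "convex_on (edom p \<times> edom q) \<phi>"
    unfolding \<phi>_def using convex_edom[OF p] convex_edom[OF q]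
    by (intro convex_on_diff convex_on_Times_sum concave_on_const[THEN iffD2] convex_Times)
  have "0 \<le> \<phi> w" if "w \<in> edom p \<times> edom q" "L w = c" for w
    using opt[of "fst w" "snd w"] that xs ys pP qQ by (cases w) (simp add: L_def \<phi>_def)
  moreover have "L (x0, y0) = c" "L (xs, ys) = c" "(xs, ys) \<in> edom p \<times> edom q" "\<phi> (xs, ys) = 0"
    using f0 fs xs ys by (simp_all add: L_def \<phi>_def)
  ultimately obtain zb where lag: "\<And>w. w \<in> edom p \<times> edom q \<Longrightarrow> 0 \<le> zb \<bullet> (L w - c) + \<phi> w"
    using lagrange_multiplier_exists[OF L \<phi> ri0] by blast
  have "- (gf xs + A zb) \<in> subdiff p xs"
  proof (rule subdiff_of_partial_minimizer[OF p xs _ f(2,3)])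
    fix u
    assume "u \<in> edom p"
    moreover have "zb \<bullet> (L (u, ys) - c) = A zb \<bullet> u - A zb \<bullet> xs"
      unfolding L_def fs[symmetric] by (simp add: adjoint_works[OF A_lin] inner_diff_right)
    ultimately show "real_of_ereal (p xs) + f xs + A zb \<bullet> xs \<le> real_of_ereal (p u) + f u + A zb \<bullet> u"
      using lag[of "(u, ys)"] ys by (simp add: \<phi>_def P_def)
  qed
  moreover have "- (gg ys + B zb) \<in> subdiff q ys"
  proof (rule subdiff_of_partial_minimizer[OF q ys _ g(2,3)])
    fix v
    assume "v \<in> edom q"
    moreover have "zb \<bullet> (L (xs, v) - c) = B zb \<bullet> v - B zb \<bullet> ys"
      unfolding L_def fs[symmetric] by (simp add: adjoint_works[OF B_lin] inner_diff_right)
    ultimately show "real_of_ereal (q ys) + g ys + B zb \<bullet> ys \<le> real_of_ereal (q v) + g v + B zb \<bullet> v"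
      using lag[of "(xs, v)"] xs by (simp add: \<phi>_def Q_def)
  qed
  ultimately show ?thesis
    using that fs by (simp add: zero_in_shifted_image_iff)
qed


lemma lyapunov_combination:
  fixes n0 n1 GX0 GX1 HY0 HY1 Bn0 Bn1 X1 X0 Xd Sd Y1 Y0 Yd Td RR RR0 Rb R0b bb aa HYs HYt Sfd Sgd
    \<alpha> \<tau> \<sigma> \<delta> \<beta> :: real
  assumes I: "(n1 - n0) / (2*\<tau>*\<sigma>) + (GX1 - GX0)/2 + (HY1 - HY0)/2 + \<sigma>/2 * (Bn1 - Bn0)
     + X1/2 + X0/2 - Xd/2 + (Xd + Sd)/2 + Y1/2 + Y0/2 - Yd/2 + HYt/2
     + (1 - \<tau>/2)*\<sigma>*RR - \<sigma>*Rb + \<sigma>/2*bb \<le> 0"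
    and HYt: "HYt = Yd + Td"
    and M: "\<sigma>*Rb \<le> (1-\<tau>)*\<sigma>*R0b + HYs/2 - HYt/2"
    and CS: "(1-\<tau>)*\<sigma>*R0b \<le> \<sigma>*\<delta>/2*bb + \<beta>*RR0"
    and AX: "aa \<le> 2*(RR - 2*Rb + bb) + 2*RR0"
    and px: "Sfd/2 \<le> X1 + X0" and py: "Sgd/2 \<le> Y1 + Y0"
    and a: "0 \<le> \<alpha>" "\<alpha> \<le> 1" and s: "0 < \<sigma>" and t: "0 < \<tau>"
  shows "(n0/(2*\<tau>*\<sigma>) + GX0/2 + HY0/2 + \<sigma>/2*Bn0 + \<alpha>/2*HYs + (\<alpha>*\<beta> + (1-\<alpha>)*\<sigma>/2)*RR0)
       - (n1/(2*\<tau>*\<sigma>) + GX1/2 + HY1/2 + \<sigma>/2*Bn1 + \<alpha>/2*HYt + (\<alpha>*\<beta> + (1-\<alpha>)*\<sigma>/2)*RR)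
     \<ge> (Sfd/2 + Sd + (1-\<alpha>)*\<sigma>/2*aa)/2 + (Sgd/2 + Td + (1-\<delta>)*\<alpha>*\<sigma>*bb)/2
       + (\<sigma>*(\<alpha>*(1-\<tau>/2) + (1-\<tau>)*(1-\<alpha>)/2) - (\<alpha>*\<beta> + (1-\<alpha>)*\<sigma>/2)) * RR"
proof -
  let ?sI = "- ((n1 - n0) / (2*\<tau>*\<sigma>) + (GX1 - GX0)/2 + (HY1 - HY0)/2 + \<sigma>/2 * (Bn1 - Bn0)
     + X1/2 + X0/2 - Xd/2 + (Xd + Sd)/2 + Y1/2 + Y0/2 - Yd/2 + HYt/2
     + (1 - \<tau>/2)*\<sigma>*RR - \<sigma>*Rb + \<sigma>/2*bb)"
  let ?sM = "(1-\<tau>)*\<sigma>*R0b + HYs/2 - HYt/2 - \<sigma>*Rb"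
  let ?sC = "\<sigma>*\<delta>/2*bb + \<beta>*RR0 - (1-\<tau>)*\<sigma>*R0b"
  let ?sA = "2*(RR - 2*Rb + bb) + 2*RR0 - aa"
  let ?sx = "X1 + X0 - Sfd/2" let ?sy = "Y1 + Y0 - Sgd/2"
  have nn: "0 \<le> ?sI" "0 \<le> ?sM" "0 \<le> ?sC" "0 \<le> ?sA" "0 \<le> ?sx" "0 \<le> ?sy"
    using I M CS AX px py by linarith+
  have "0 \<le> ?sI + \<alpha> * ?sM + \<alpha> * ?sC + ((1-\<alpha>)*\<sigma>/4) * ?sA + ?sx/2 + ?sy/2"
    using nn a s by (intro add_nonneg_nonneg mult_nonneg_nonneg) auto
  also have "?sI + \<alpha> * ?sM + \<alpha> * ?sC + ((1-\<alpha>)*\<sigma>/4) * ?sA + ?sx/2 + ?sy/2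
    = (n0/(2*\<tau>*\<sigma>) + GX0/2 + HY0/2 + \<sigma>/2*Bn0 + \<alpha>/2*HYs + (\<alpha>*\<beta> + (1-\<alpha>)*\<sigma>/2)*RR0)
       - (n1/(2*\<tau>*\<sigma>) + GX1/2 + HY1/2 + \<sigma>/2*Bn1 + \<alpha>/2*HYt + (\<alpha>*\<beta> + (1-\<alpha>)*\<sigma>/2)*RR)
     - ((Sfd/2 + Sd + (1-\<alpha>)*\<sigma>/2*aa)/2 + (Sgd/2 + Td + (1-\<delta>)*\<alpha>*\<sigma>*bb)/2
       + (\<sigma>*(\<alpha>*(1-\<tau>/2) + (1-\<tau>)*(1-\<alpha>)/2) - (\<alpha>*\<beta> + (1-\<alpha>)*\<sigma>/2)) * RR)"
    unfolding HYt by (simp add: algebra_simps diff_divide_distrib add_divide_distrib)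
  finally show ?thesis by linarith
qed


lemma multiplier_update_identity:
  fixes a1 b1 b0 ze0 ze1 R w Bdy :: "'a::real_inner"
  assumes R: "R = a1 + b1" and w: "w = R - Bdy" and Bdy: "Bdy = b1 - b0"
    and z: "ze1 = ze0 + (\<tau>*\<sigma>) *\<^sub>R R" and ts: "\<tau>*\<sigma> \<noteq> 0"
  shows "ze0 \<bullet> a1 + \<sigma> * (w \<bullet> a1) + ze0 \<bullet> b1 + \<sigma> * (R \<bullet> b1)
     = ((norm ze1)\<^sup>2 - (norm ze0)\<^sup>2) / (2*\<tau>*\<sigma>) + (1 - \<tau>/2)*\<sigma>*(norm R)\<^sup>2 - \<sigma>*(R \<bullet> Bdy)
       + \<sigma>/2 * ((norm b1)\<^sup>2 - (norm b0)\<^sup>2 + (norm Bdy)\<^sup>2)"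
proof -
  have n1: "(norm ze1)\<^sup>2 = (norm ze0)\<^sup>2 + 2*(\<tau>*\<sigma>)*(ze0 \<bullet> R) + (\<tau>*\<sigma>)\<^sup>2 * (norm R)\<^sup>2"
    unfolding z norm_add_square by (simp add: power_mult_distrib)
  have b0: "b0 = b1 - Bdy" using Bdy by simp
  have nb0: "(norm b0)\<^sup>2 = (norm b1)\<^sup>2 - 2*(b1 \<bullet> Bdy) + (norm Bdy)\<^sup>2"
    unfolding b0 norm_diff_square ..
  have a1: "a1 = R - b1" using R by simp
  have l1: "ze0 \<bullet> a1 + ze0 \<bullet> b1 = ze0 \<bullet> R" by (simp add: R inner_add_right)
  have l2: "w \<bullet> a1 + R \<bullet> b1 = (norm R)\<^sup>2 - R \<bullet> Bdy + b1 \<bullet> Bdy"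
    unfolding w a1 by (simp add: inner_diff_left inner_diff_right power2_norm_eq_inner inner_commute)
  have l3: "ze0 \<bullet> R = ((norm ze1)\<^sup>2 - (norm ze0)\<^sup>2 - (\<tau>*\<sigma>)\<^sup>2 * (norm R)\<^sup>2) / (2*\<tau>*\<sigma>)"
    using n1 ts by (simp add: field_simps)
  have "ze0 \<bullet> a1 + \<sigma> * (w \<bullet> a1) + ze0 \<bullet> b1 + \<sigma> * (R \<bullet> b1) = ze0 \<bullet> R + \<sigma> * ((norm R)\<^sup>2 - R \<bullet> Bdy + b1 \<bullet> Bdy)"
    unfolding l2[symmetric] l1[symmetric] by (simp add: algebra_simps)
  also have "\<dots> = ((norm ze1)\<^sup>2 - (norm ze0)\<^sup>2) / (2*\<tau>*\<sigma>) + (1 - \<tau>/2)*\<sigma>*(norm R)\<^sup>2 - \<sigma>*(R \<bullet> Bdy)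
       + \<sigma>/2 * ((norm b1)\<^sup>2 - (norm b0)\<^sup>2 + (norm Bdy)\<^sup>2)"
    unfolding l3 nb0 using ts by (simp add: field_simps power2_eq_square)
  finally show ?thesis .
qed


lemma young_multiplier_bound:
  fixes R0 b :: "'a::real_inner" and \<tau> \<sigma> :: real
  assumes t: "0 < \<tau>" and s: "0 < \<sigma>"
  shows "(1-\<tau>)*\<sigma>*(R0 \<bullet> b) \<le> \<sigma>*(if \<tau> \<le> 1 then 1 - \<tau> else (\<tau>-1)*\<tau>)/2*(norm b)\<^sup>2
     + (if \<tau> \<le> 1 then (1-\<tau>)*\<sigma>/2 else (\<tau>-1)*\<sigma>/(2*\<tau>))*(norm R0)\<^sup>2"
proof (cases "\<tau> \<le> 1")
  case True
  have "0 \<le> (norm (R0 - b))\<^sup>2" by simp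
  hence h: "2*(R0 \<bullet> b) \<le> (norm R0)\<^sup>2 + (norm b)\<^sup>2" unfolding norm_diff_square by simp
  have c: "0 \<le> (1-\<tau>)*\<sigma>/2" using True s by simp
  have "(1-\<tau>)*\<sigma>*(R0 \<bullet> b) = (1-\<tau>)*\<sigma>/2 * (2*(R0 \<bullet> b))" by simp
  also have "\<dots> \<le> (1-\<tau>)*\<sigma>/2 * ((norm R0)\<^sup>2 + (norm b)\<^sup>2)"
    by (rule mult_left_mono[OF h c])
  also have "\<dots> = \<sigma>*(1 - \<tau>)/2*(norm b)\<^sup>2 + (1-\<tau>)*\<sigma>/2*(norm R0)\<^sup>2" by (simp add: algebra_simps)
  finally show ?thesis using True by simp
next
  case False
  have "0 \<le> (norm (\<tau> *\<^sub>R b + R0))\<^sup>2" by simp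
  hence h0: "0 \<le> \<tau>\<^sup>2 * (norm b)\<^sup>2 + 2*\<tau>*(R0 \<bullet> b) + (norm R0)\<^sup>2"
    unfolding norm_add_square by (simp add: power_mult_distrib inner_commute)
  have h: "0 \<le> \<tau> * (norm b)\<^sup>2 + 2*(R0 \<bullet> b) + (norm R0)\<^sup>2 / \<tau>"
  proof -
    have "0 \<le> (\<tau>\<^sup>2 * (norm b)\<^sup>2 + 2*\<tau>*(R0 \<bullet> b) + (norm R0)\<^sup>2) / \<tau>" using h0 t by simp
    also have "\<dots> = \<tau> * (norm b)\<^sup>2 + 2*(R0 \<bullet> b) + (norm R0)\<^sup>2 / \<tau>" using t
      by (simp add: field_simps power2_eq_square)
    finally show ?thesis .
  qed
  have c: "0 \<le> (\<tau>-1)*\<sigma>/2" using False s by simp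
  have "(\<tau>-1)*\<sigma>/2 * 0 \<le> (\<tau>-1)*\<sigma>/2 * (\<tau> * (norm b)\<^sup>2 + 2*(R0 \<bullet> b) + (norm R0)\<^sup>2 / \<tau>)"
    by (rule mult_left_mono[OF h c])
  moreover have "(\<tau>-1)*\<sigma>/2 * (\<tau> * (norm b)\<^sup>2 + 2*(R0 \<bullet> b) + (norm R0)\<^sup>2 / \<tau>)
     = (\<sigma>*((\<tau>-1)*\<tau>)/2*(norm b)\<^sup>2 + (\<tau>-1)*\<sigma>/(2*\<tau>)*(norm R0)\<^sup>2) - (1-\<tau>)*\<sigma>*(R0 \<bullet> b)"
    using t by (simp add: field_simps)
  ultimately show ?thesis using False by simp
qed

lemma summable_of_sufficient_decrease:
  fixes a V :: "nat \<Rightarrow> real"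
  assumes "0 < \<mu>" "\<And>j. 0 \<le> a j" "\<And>j. 0 \<le> V j" "\<And>j. \<mu> * a j \<le> V j - V (Suc j)"
  shows "summable a"
proof (rule summableI_nonneg_bounded[OF assms(2)])
  fix n
  have "\<mu> * (\<Sum>j<n. a j) \<le> (\<Sum>j<n. V j - V (Suc j))"
    using assms(4) by (simp add: sum_distrib_left sum_mono)
  also have "\<dots> = V 0 - V n"
    by (rule sum_lessThan_telescope')
  finally show "(\<Sum>j<n. a j) \<le> V 0 / \<mu>"
    using assms(1) assms(3)[of n] by (simp add: field_simps)
qed

lemma square_le_three_sum_squares:
  fixes n K a b c :: real
  assumes "0 \<le> n" "n \<le> K * (a + b + c)" "0 \<le> K" "0 \<le> a" "0 \<le> b" "0 \<le> c"
  shows "n\<^sup>2 \<le> 3 * K\<^sup>2 * (a\<^sup>2 + b\<^sup>2 + c\<^sup>2)"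
proof -
  have "n\<^sup>2 \<le> K\<^sup>2 * (a + b + c)\<^sup>2"
    using assms power_mono[OF assms(2) assms(1)] by (simp add: power_mult_distrib)
  also have "\<dots> \<le> K\<^sup>2 * (3 * (a\<^sup>2 + b\<^sup>2 + c\<^sup>2))"
  proof (rule mult_left_mono)
    have "0 \<le> (a - b)\<^sup>2 + (b - c)\<^sup>2 + (a - c)\<^sup>2"
      by simp
    then show "(a + b + c)\<^sup>2 \<le> 3 * (a\<^sup>2 + b\<^sup>2 + c\<^sup>2)"
      by (simp add: power2_eq_square algebra_simps)
  qed simp
  finally show ?thesis
    by (simp add: algebra_simps)
qed

lemma norm_scaleR_linear_le:
  assumes "\<And>u. norm (L u) \<le> K * norm u" "0 \<le> K"
  shows "norm (c *\<^sub>R L u) \<le> \<bar>c\<bar> * K * norm u"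
  using mult_left_mono[OF assms(1)[of u] abs_ge_zero[of c]] by (simp add: mult.assoc)

lemma subgradient_inequality_plus_smooth:
  assumes v: "v \<in> subdiff p u" and nm: "\<And>u. p u \<noteq> -\<infinity>" and w: "p w < \<infinity>"
    and lo: "\<And>u u'. f u' + (u - u') \<bullet> gf u' + qf Sf (u - u') / 2 \<le> f u" and "psd Sf"
  shows "real_of_ereal (p u) + f u + (v + gf u) \<bullet> (w - u) \<le> real_of_ereal (p w) + f w"
proof -
  obtain pu where pu: "p u = ereal pu"
    using subdiff_finite_value[OF v nm] by blast
  obtain pw where pw: "p w = ereal pw"
    using w nm[of w] by (cases "p w") auto
  have "p u + ereal (v \<bullet> (w - u)) \<le> p w"
    using v by (simp add: subdiff_def)
  then have "pu + v \<bullet> (w - u) \<le> pw"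
    using pu pw by simp
  moreover have "f u + (w - u) \<bullet> gf u \<le> f w"
    using lo[where u=w and u'=u] \<open>psd Sf\<close>[unfolded psd_def, rule_format, of "w - u"] by linarith
  ultimately show ?thesis
    using pu pw by (simp add: inner_add_left inner_commute[of "gf u"])
qed

lemma norm_diff_square_le: "(norm (a - b))\<^sup>2 \<le> 2 * (norm a)\<^sup>2 + 2 * (norm (b::'a::real_inner))\<^sup>2"
  using norm_diff_square[of a b] norm_add_square[of a b] zero_le_power2[of "norm (a + b)"] by linarith

lemma augmented_quadratic_expansion:
  fixes G :: "'a::euclidean_space \<Rightarrow> 'a" and A :: "'b::euclidean_space \<Rightarrow> 'a"
  assumes G: "self_adjoint G" and A: "linear A"
    and h: "\<And>u. h u = g \<bullet> u + qf G (u - a) / 2 + z \<bullet> adjoint A u + \<sigma> / 2 * (norm (adjoint A u + e))\<^sup>2"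
  shows "h (xm + t *\<^sub>R d) = h xm + t * ((g + G (xm - a) + A z + \<sigma> *\<^sub>R A (adjoint A xm + e)) \<bullet> d)
           + t\<^sup>2 * ((qf G d + \<sigma> * (norm (adjoint A d))\<^sup>2) / 2)"
proof -
  have lA: "linear (adjoint A)"
    by (rule adjoint_linear[OF A])
  have "qf G (xm + t *\<^sub>R d - a) = qf G ((xm - a) + t *\<^sub>R d)"
    by (simp add: algebra_simps)
  also have "\<dots> = qf G (xm - a) + 2 * t * (G (xm - a) \<bullet> d) + t\<^sup>2 * qf G d"
    using qf_add[OF G, of "xm - a" "t *\<^sub>R d"] qf_scaleR[OF self_adjoint_linear[OF G], of t d] by simp
  finally have quad: "qf G (xm + t *\<^sub>R d - a) = \<dots>" .
  have "adjoint A (xm + t *\<^sub>R d) + e = (adjoint A xm + e) + t *\<^sub>R adjoint A d"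
    by (simp add: linear_add[OF lA] linear_scale[OF lA])
  then have pen: "(norm (adjoint A (xm + t *\<^sub>R d) + e))\<^sup>2 = (norm (adjoint A xm + e))\<^sup>2
      + 2 * t * ((adjoint A xm + e) \<bullet> adjoint A d) + t\<^sup>2 * (norm (adjoint A d))\<^sup>2"
    by (simp only: norm_add_square) (simp add: power_mult_distrib)
  have lin: "z \<bullet> adjoint A (xm + t *\<^sub>R d) = z \<bullet> adjoint A xm + t * (A z \<bullet> d)"
    by (simp add: linear_add[OF lA] linear_scale[OF lA] inner_add_right adjoint_works[OF A])
  have grad: "(g + G (xm - a) + A z + \<sigma> *\<^sub>R A (adjoint A xm + e)) \<bullet> d
      = g \<bullet> d + G (xm - a) \<bullet> d + A z \<bullet> d + \<sigma> * ((adjoint A xm + e) \<bullet> adjoint A d)"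
    by (simp add: inner_add_left adjoint_works[OF A])
  show ?thesis
    unfolding h quad pen lin grad by (simp add: algebra_simps inner_add_right add_divide_distrib)
qed

locale majorized_ipadmm =
  fixes p :: "'x::euclidean_space \<Rightarrow> ereal" and q :: "'y::euclidean_space \<Rightarrow> ereal"
    and f :: "'x \<Rightarrow> real" and g :: "'y \<Rightarrow> real"
    and gf :: "'x \<Rightarrow> 'x" and gg :: "'y \<Rightarrow> 'y"
    and A :: "'z::euclidean_space \<Rightarrow> 'x" and B :: "'z \<Rightarrow> 'y" and c :: 'z
    and Sf Shf S :: "'x \<Rightarrow> 'x" and Sg Shg T :: "'y \<Rightarrow> 'y"
    and \<sigma> \<tau> \<alpha> :: real
    and x :: "nat \<Rightarrow> 'x" and y :: "nat \<Rightarrow> 'y" and z :: "nat \<Rightarrow> 'z"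
  assumes p: "proper_fun p" "convex_efun p" and q: "proper_fun q" "convex_efun q"
    and f_maj: "\<And>u u'. f u' + (u - u') \<bullet> gf u' + qf Sf (u - u') / 2 \<le> f u"
               "\<And>u u'. f u \<le> f u' + (u - u') \<bullet> gf u' + qf Shf (u - u') / 2"
    and g_maj: "\<And>v v'. g v' + (v - v') \<bullet> gg v' + qf Sg (v - v') / 2 \<le> g v"
               "\<And>v v'. g v \<le> g v' + (v - v') \<bullet> gg v' + qf Shg (v - v') / 2"
    and gf_lip: "\<exists>L. L-lipschitz_on UNIV gf" and gg_lip: "\<exists>L. L-lipschitz_on UNIV gg"
    and A_lin: "linear A" and B_lin: "linear B"
    and Sf: "self_adjoint Sf" "psd Sf" and Shf: "self_adjoint Shf" "psd (\<lambda>u. Shf u - Sf u)"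
    and Sg: "self_adjoint Sg" "psd Sg" and Shg: "self_adjoint Shg" "psd (\<lambda>u. Shg u - Sg u)"
    and S: "self_adjoint S" and T: "self_adjoint T"
    and \<sigma>: "\<sigma> > 0"
    and x_step: "\<And>k u. p (x (Suc k)) + ereal (gf (x k) \<bullet> x (Suc k)
                        + qf (\<lambda>w. Shf w + S w) (x (Suc k) - x k) / 2
                        + z k \<bullet> adjoint A (x (Suc k))
                        + \<sigma> / 2 * (norm (adjoint A (x (Suc k)) + adjoint B (y k) - c))\<^sup>2)
                   \<le> p u + ereal (gf (x k) \<bullet> u + qf (\<lambda>w. Shf w + S w) (u - x k) / 2
                        + z k \<bullet> adjoint A u
                        + \<sigma> / 2 * (norm (adjoint A u + adjoint B (y k) - c))\<^sup>2)"
    and y_step: "\<And>k v. q (y (Suc k)) + ereal (gg (y k) \<bullet> y (Suc k)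
                        + qf (\<lambda>w. Shg w + T w) (y (Suc k) - y k) / 2
                        + z k \<bullet> adjoint B (y (Suc k))
                        + \<sigma> / 2 * (norm (adjoint A (x (Suc k)) + adjoint B (y (Suc k)) - c))\<^sup>2)
                   \<le> q v + ereal (gg (y k) \<bullet> v + qf (\<lambda>w. Shg w + T w) (v - y k) / 2
                        + z k \<bullet> adjoint B v
                        + \<sigma> / 2 * (norm (adjoint A (x (Suc k)) + adjoint B v - c))\<^sup>2)"
    and z_step: "\<And>k. z (Suc k) = z k + (\<tau> * \<sigma>) *\<^sub>R
                        (adjoint A (x (Suc k)) + adjoint B (y (Suc k)) - c)"
    and \<tau>: "0 < \<tau>"
    and \<alpha>: "\<tau> / min (1 + \<tau>) (1 + 1 / \<tau>) < \<alpha>" "\<alpha> \<le> 1"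
    and Hf_psd: "psd (\<lambda>u. Shf u + S u)"
    and Hf_pd: "pd (\<lambda>u. (1/2) *\<^sub>R Sf u + S u + ((1 - \<alpha>) * \<sigma> / 2) *\<^sub>R A (adjoint A u))"
    and Hg_psd: "psd (\<lambda>v. (1/2) *\<^sub>R Shg v + T v)"
    and Mg_pd: "pd (\<lambda>v. (1/2) *\<^sub>R Sg v + T v
                     + (min \<tau> (1 + \<tau> - \<tau>\<^sup>2) * \<alpha> * \<sigma>) *\<^sub>R B (adjoint B v))"
begin

abbreviation "At \<equiv> adjoint A"
abbreviation "Bt \<equiv> adjoint B"
abbreviation "Gx \<equiv> (\<lambda>w. Shf w + S w)"
abbreviation "Hy \<equiv> (\<lambda>w. Shg w + T w)"

lemma At_linear: "linear At" and Bt_linear: "linear Bt"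
  by (simp_all add: adjoint_linear A_lin B_lin)

lemma p_not_minf: "p u \<noteq> -\<infinity>" and q_not_minf: "q v \<noteq> -\<infinity>"
  using p(1) q(1) by (simp_all add: proper_fun_def)

lemma Gx_self_adjoint: "self_adjoint Gx" and Hy_self_adjoint: "self_adjoint Hy"
  by (simp_all add: self_adjoint_add Shf(1) S Shg(1) T)

lemma p_iterate_finite: "p (x (Suc k)) < \<infinity>"
proof -
  obtain u where "p u < \<infinity>"
    using p(1) by (auto simp: proper_fun_def edom_def)
  then obtain pu where "p u = ereal pu"
    using p_not_minf[of u] by (cases "p u") auto
  then show ?thesis
    using x_step[of k u] by (cases "p (x (Suc k))") auto
qed

lemma q_iterate_finite: "q (y (Suc k)) < \<infinity>"
proof -
  obtain v where "q v < \<infinity>"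
    using q(1) by (auto simp: proper_fun_def edom_def)
  then obtain qv where "q v = ereal qv"
    using q_not_minf[of v] by (cases "q v") auto
  then show ?thesis
    using y_step[of k v] by (cases "q (y (Suc k))") auto
qed

text \<open>The optimality conditions of the two subproblems exhibit explicit subgradients of
  \<open>p\<close> at \<open>x (k + 1)\<close> and of \<open>q\<close> at \<open>y (k + 1)\<close>.\<close>

definition subgrad_p :: "nat \<Rightarrow> 'x" where
  "subgrad_p k = - (gf (x k) + Gx (x (Suc k) - x k) + A (z k)
    + \<sigma> *\<^sub>R A (At (x (Suc k)) + (Bt (y k) - c)))"

definition subgrad_q :: "nat \<Rightarrow> 'y" where
  "subgrad_q k = - (gg (y k) + Hy (y (Suc k) - y k) + B (z k)
    + \<sigma> *\<^sub>R B (Bt (y (Suc k)) + (At (x (Suc k)) - c)))"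

lemma subgrad_p_in_subdiff: "subgrad_p k \<in> subdiff p (x (Suc k))"
  unfolding subgrad_p_def
proof (rule subdiff_of_minimizer[OF p(2) p_not_minf p_iterate_finite])
  define h where "h u = gf (x k) \<bullet> u + qf Gx (u - x k) / 2 + z k \<bullet> At u
     + \<sigma> / 2 * (norm (At u + (Bt (y k) - c)))\<^sup>2" for u
  show "p (x (Suc k)) + ereal (h (x (Suc k))) \<le> p u + ereal (h u)" for u
    using x_step[of k u] by (simp add: h_def add_diff_eq)
  show "h (x (Suc k) + t *\<^sub>R d) \<le> h (x (Suc k))
      + t * ((gf (x k) + Gx (x (Suc k) - x k) + A (z k) + \<sigma> *\<^sub>R A (At (x (Suc k)) + (Bt (y k) - c))) \<bullet> d)
      + t\<^sup>2 * ((qf Gx d + \<sigma> * (norm (At d))\<^sup>2) / 2)" for t d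
    using augmented_quadratic_expansion[OF Gx_self_adjoint A_lin h_def] by simp
qed

lemma subgrad_q_in_subdiff: "subgrad_q k \<in> subdiff q (y (Suc k))"
  unfolding subgrad_q_def
proof (rule subdiff_of_minimizer[OF q(2) q_not_minf q_iterate_finite])
  define h where "h v = gg (y k) \<bullet> v + qf Hy (v - y k) / 2 + z k \<bullet> Bt v
     + \<sigma> / 2 * (norm (Bt v + (At (x (Suc k)) - c)))\<^sup>2" for v
  show "q (y (Suc k)) + ereal (h (y (Suc k))) \<le> q v + ereal (h v)" for v
    using y_step[of k v] by (simp add: h_def algebra_simps)
  show "h (y (Suc k) + t *\<^sub>R d) \<le> h (y (Suc k))
      + t * ((gg (y k) + Hy (y (Suc k) - y k) + B (z k) + \<sigma> *\<^sub>R B (Bt (y (Suc k)) + (At (x (Suc k)) - c))) \<bullet> d)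
      + t\<^sup>2 * ((qf Hy d + \<sigma> * (norm (Bt d))\<^sup>2) / 2)" for t d
    using augmented_quadratic_expansion[OF Hy_self_adjoint B_lin h_def] by simp
qed


text \<open>\<open>\<beta>\<close> and \<open>\<delta>\<close> are the weights of the Young inequality used to bound
  \<open>(1 - \<tau>) \<sigma> \<langle>r, B\<^sup>* \<Delta>y\<rangle>\<close>, \<open>\<kappa>\<close> is the weight of \<open>\<parallel>r\<parallel>\<^sup>2\<close> in the Lyapunov
  function and \<open>\<gamma>\<close> the coefficient of \<open>\<parallel>r\<parallel>\<^sup>2\<close> in its decrease.\<close>

definition "\<beta> = (if \<tau> \<le> 1 then (1 - \<tau>) * \<sigma> / 2 else (\<tau> - 1) * \<sigma> / (2 * \<tau>))"
definition "\<delta> = (if \<tau> \<le> 1 then 1 - \<tau> else (\<tau> - 1) * \<tau>)"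
definition "\<kappa> = \<alpha> * \<beta> + (1 - \<alpha>) * \<sigma> / 2"
definition "\<gamma> = \<sigma> * (\<alpha> * (1 - \<tau> / 2) + (1 - \<tau>) * (1 - \<alpha>) / 2) - \<kappa>"

lemma alpha_pos: "0 < \<alpha>"
proof -
  have "0 < 1 + 1 / \<tau>"
    using \<tau> by (simp add: add_pos_pos)
  then have "0 < \<tau> / min (1 + \<tau>) (1 + 1 / \<tau>)"
    using \<tau> by simp
  then show ?thesis
    using \<alpha>(1) by linarith
qed

lemma gamma_pos: "0 < \<gamma>"
proof (cases "\<tau> \<le> 1")
  case True
  then have "\<tau> \<le> 1 / \<tau>"
    using \<tau> by (simp add: field_simps power2_eq_square) (metis mult_le_one less_imp_le)
  then have "\<tau> / (1 + \<tau>) < \<alpha>"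
    using \<alpha>(1) by (simp add: min_def)
  then have "\<tau> < \<alpha> * (1 + \<tau>)"
    using \<tau> by (simp add: field_simps)
  then have "0 < \<sigma> * (\<alpha> * (1 + \<tau>) - \<tau>)"
    using \<sigma> by simp
  moreover have "\<gamma> = \<sigma> * (\<alpha> * (1 + \<tau>) - \<tau>) / 2"
    using True by (simp add: \<gamma>_def \<kappa>_def \<beta>_def field_simps)
  ultimately show ?thesis
    by simp
next
  case False
  then have "1 / \<tau> < \<tau>"
    by (simp add: field_simps) (metis less_1_mult not_le)
  then have "\<tau> / (1 + 1 / \<tau>) < \<alpha>"
    using \<alpha>(1) by (simp add: min_def)
  moreover have "\<tau> / (1 + 1 / \<tau>) = \<tau>\<^sup>2 / (\<tau> + 1)"
    using \<tau> by (simp add: field_simps power2_eq_square)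
  ultimately have "\<tau>\<^sup>2 < \<alpha> * (\<tau> + 1)"
    using \<tau> by (simp add: field_simps)
  moreover have "\<gamma> = \<sigma> * (\<alpha> * (\<tau> + 1) - \<tau>\<^sup>2) / (2 * \<tau>)"
    using False \<tau> by (simp add: \<gamma>_def \<kappa>_def \<beta>_def field_simps power2_eq_square)
  ultimately show ?thesis
    using \<sigma> \<tau> by simp
qed

lemma one_minus_delta: "1 - \<delta> = min \<tau> (1 + \<tau> - \<tau>\<^sup>2)"
proof (cases "\<tau> \<le> 1")
  case True
  then have "\<tau>\<^sup>2 \<le> 1"
    using \<tau> by (simp add: power_le_one)
  then show ?thesis
    using True by (simp add: \<delta>_def)
next
  case False
  then have "1 < \<tau>\<^sup>2"
    by (simp add: one_less_power)
  then show ?thesis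
    using False by (simp add: \<delta>_def algebra_simps power2_eq_square)
qed

lemma kappa_nonneg: "0 \<le> \<kappa>"
proof -
  have "0 \<le> \<beta>"
    unfolding \<beta>_def using \<sigma> \<tau> by auto
  then show ?thesis
    unfolding \<kappa>_def using alpha_pos \<alpha>(2) \<sigma> by simp
qed

lemma qf_Gx_nonneg: "0 \<le> qf Gx u"
  using Hf_psd by (simp add: psd_def)

lemma qf_Sg_le_Shg: "qf Sg v \<le> qf Shg v"
  using Shg(2) unfolding psd_def by (simp add: qf_def inner_diff_right)

lemma qf_Hy_nonneg: "0 \<le> qf Hy v"
proof -
  have "0 \<le> qf Shg v / 2 + qf T v"
    using Hg_psd unfolding psd_def by (simp add: qf_def inner_add_right)
  moreover have "0 \<le> qf Sg v"
    using Sg(2) by (simp add: psd_def)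
  ultimately show ?thesis
    using qf_Sg_le_Shg[of v] qf_fun_add[of Shg T v] by linarith
qed

lemma Hf_coercive:
  obtains m where "m > 0" "\<And>u. m * (norm u)\<^sup>2 \<le> qf Sf u / 2 + qf S u + (1 - \<alpha>) * \<sigma> / 2 * (norm (At u))\<^sup>2"
proof -
  have "linear (\<lambda>u. (1/2) *\<^sub>R Sf u + S u + ((1 - \<alpha>) * \<sigma> / 2) *\<^sub>R A (At u))"
    using self_adjoint_linear[OF Sf(1)] self_adjoint_linear[OF S] linear_compose[OF At_linear A_lin]
    by (auto simp: o_def intro!: linear_compose_add linear_compose_scale_right)
  from pd_coercive[OF this Hf_pd] obtain m where "m > 0"
    "\<And>u. m * (norm u)\<^sup>2 \<le> qf (\<lambda>u. (1/2) *\<^sub>R Sf u + S u + ((1 - \<alpha>) * \<sigma> / 2) *\<^sub>R A (At u)) u"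
    by blast
  then show ?thesis
    using that by (simp add: qf_def inner_add_right adjoint_clauses(2)[OF A_lin, symmetric] power2_norm_eq_inner)
qed

lemma Mg_coercive:
  obtains m where "m > 0" "\<And>v. m * (norm v)\<^sup>2 \<le> qf Sg v / 2 + qf T v + (1 - \<delta>) * \<alpha> * \<sigma> * (norm (Bt v))\<^sup>2"
proof -
  have "linear (\<lambda>v. (1/2) *\<^sub>R Sg v + T v + (min \<tau> (1 + \<tau> - \<tau>\<^sup>2) * \<alpha> * \<sigma>) *\<^sub>R B (Bt v))"
    using self_adjoint_linear[OF Sg(1)] self_adjoint_linear[OF T] linear_compose[OF Bt_linear B_lin]
    by (auto simp: o_def intro!: linear_compose_add linear_compose_scale_right)
  from pd_coercive[OF this Mg_pd] obtain m where "m > 0"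
    "\<And>v. m * (norm v)\<^sup>2 \<le> qf (\<lambda>v. (1/2) *\<^sub>R Sg v + T v + (min \<tau> (1 + \<tau> - \<tau>\<^sup>2) * \<alpha> * \<sigma>) *\<^sub>R B (Bt v)) v"
    by blast
  then show ?thesis
    using that by (simp add: qf_def inner_add_right adjoint_clauses(2)[OF B_lin, symmetric] power2_norm_eq_inner
        one_minus_delta)
qed


lemma Gx_At_coercive:
  obtains m where "m > 0" "\<And>u. m * (norm u)\<^sup>2 \<le> qf Gx u + \<sigma> * (norm (At u))\<^sup>2"
proof -
  obtain m where m: "m > 0" "\<And>u. m * (norm u)\<^sup>2 \<le> qf Sf u / 2 + qf S u + (1 - \<alpha>) * \<sigma> / 2 * (norm (At u))\<^sup>2"
    using Hf_coercive by blast
  have "qf Sf u / 2 + qf S u + (1 - \<alpha>) * \<sigma> / 2 * (norm (At u))\<^sup>2 \<le> qf Gx u + \<sigma> * (norm (At u))\<^sup>2" for u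
  proof -
    have "qf Sf u \<le> qf Shf u" "0 \<le> qf Sf u"
      using Shf(2) Sf(2) unfolding psd_def by (simp_all add: qf_def inner_diff_right)
    moreover have "(1 - \<alpha>) * \<sigma> / 2 * (norm (At u))\<^sup>2 \<le> \<sigma> * (norm (At u))\<^sup>2"
      using alpha_pos \<sigma> by (intro mult_right_mono) auto
    ultimately show ?thesis
      using qf_fun_add[of Shf S u] by linarith
  qed
  then show ?thesis
    using that m by (meson order_trans)
qed

lemma Hy_Bt_coercive:
  obtains m where "m > 0" "\<And>v. m * (norm v)\<^sup>2 \<le> qf Hy v + \<sigma> * (norm (Bt v))\<^sup>2"
proof -
  obtain m where m: "m > 0" "\<And>v. m * (norm v)\<^sup>2 \<le> qf Sg v / 2 + qf T v + (1 - \<delta>) * \<alpha> * \<sigma> * (norm (Bt v))\<^sup>2"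
    using Mg_coercive by blast
  have "0 \<le> \<delta>"
    unfolding \<delta>_def using \<tau> by auto
  then have "(1 - \<delta>) * \<alpha> \<le> 1"
    using mult_right_mono[of "1 - \<delta>" 1 \<alpha>] alpha_pos \<alpha>(2) by linarith
  have "(1 - \<delta>) * \<alpha> * (\<sigma> * (norm (Bt v))\<^sup>2) \<le> \<sigma> * (norm (Bt v))\<^sup>2" for v
  proof (cases "0 \<le> (1 - \<delta>) * \<alpha>")
    case True
    then show ?thesis
      using \<open>(1 - \<delta>) * \<alpha> \<le> 1\<close> \<sigma> by (intro mult_left_le_one_le) auto
  next
    case False
    moreover have "0 \<le> \<sigma> * (norm (Bt v))\<^sup>2"
      using \<sigma> by simp
    ultimately show ?thesis
      using mult_nonpos_nonneg[of "(1 - \<delta>) * \<alpha>" "\<sigma> * (norm (Bt v))\<^sup>2"] by linarith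
  qed
  then have "qf Sg v / 2 + qf T v + (1 - \<delta>) * \<alpha> * \<sigma> * (norm (Bt v))\<^sup>2 \<le> qf Hy v + \<sigma> * (norm (Bt v))\<^sup>2" for v
  proof -
    have "qf Sg v \<le> qf Shg v" "0 \<le> qf Sg v"
      using qf_Sg_le_Shg Sg(2) unfolding psd_def by auto
    moreover have "(1 - \<delta>) * \<alpha> * \<sigma> * (norm (Bt v))\<^sup>2 = (1 - \<delta>) * \<alpha> * (\<sigma> * (norm (Bt v))\<^sup>2)"
      by (simp add: mult.assoc)
    ultimately show ?thesis
      using qf_fun_add[of Shg T v] \<open>(1 - \<delta>) * \<alpha> * (\<sigma> * (norm (Bt v))\<^sup>2) \<le> \<sigma> * (norm (Bt v))\<^sup>2\<close> by linarith
  qed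
  then show ?thesis
    using that m by (meson order_trans)
qed

definition residual where
  "residual k = At (x k) + Bt (y k) - c"

lemma subgrad_q_residual: "Bt (y (Suc k)) + (At (x (Suc k)) - c) = residual (Suc k)"
  by (simp add: residual_def algebra_simps)

lemma z_step_residual: "z (Suc k) = z k + (\<tau> * \<sigma>) *\<^sub>R residual (Suc k)"
  unfolding residual_def by (rule z_step)

lemma y_monotonicity_step:
  fixes j :: nat
  defines "t \<equiv> y (Suc (Suc j)) - y (Suc j)" and "s \<equiv> y (Suc j) - y j"
  shows "\<sigma> * (residual (Suc (Suc j)) \<bullet> Bt t)
    \<le> (1 - \<tau>) * \<sigma> * (residual (Suc j) \<bullet> Bt t) + qf Hy s / 2 - qf Hy t / 2"
proof -
  define R2 where "R2 = residual (Suc (Suc j))"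
  define R1 where "R1 = residual (Suc j)"
  have "0 \<le> (subgrad_q (Suc j) - subgrad_q j) \<bullet> t"
    unfolding t_def by (rule subdiff_monotone[OF subgrad_q_in_subdiff subgrad_q_in_subdiff q_not_minf])
  moreover have "(subgrad_q (Suc j) - subgrad_q j) \<bullet> t = - ((gg (y (Suc j)) - gg (y j)) \<bullet> t) - Hy t \<bullet> t
      + Hy s \<bullet> t - \<sigma> * (R2 \<bullet> Bt t) + (1 - \<tau>) * \<sigma> * (R1 \<bullet> Bt t)"
  proof -
    have "subgrad_q (Suc j) - subgrad_q j = - (gg (y (Suc j)) - gg (y j)) - Hy t + Hy s
        - (\<tau> * \<sigma>) *\<^sub>R B R1 - \<sigma> *\<^sub>R B R2 + \<sigma> *\<^sub>R B R1"
      unfolding subgrad_q_def subgrad_q_residual t_def s_def R1_def[symmetric] R2_def[symmetric] z_step_residual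
      by (simp add: linear_add[OF B_lin] linear_scale[OF B_lin] algebra_simps)
    then show ?thesis
      by (simp only:) (simp add: inner_add_left inner_diff_left adjoint_works[OF B_lin, symmetric] algebra_simps)
  qed
  moreover have "qf Hy t = Hy t \<bullet> t"
    by (simp add: qf_def inner_commute)
  moreover have "- qf Shg (t - s) / 4 \<le> (gg (y (Suc j)) - gg (y j)) \<bullet> t"
    unfolding t_def s_def
    by (rule majorized_gradient_lower_bound[OF g_maj Sg(2) self_adjoint_linear[OF Shg(1)]])
  moreover have "Hy s \<bullet> t = (qf Hy t + qf Hy s - qf Hy (t - s)) / 2"
    by (rule qf_polarization[OF Hy_self_adjoint])
  moreover have "0 \<le> qf Shg (t - s) / 2 + qf T (t - s)"
    using Hg_psd unfolding psd_def by (simp add: qf_def inner_add_right)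
  moreover have "qf Hy (t - s) = qf Shg (t - s) + qf T (t - s)"
    by (rule qf_fun_add)
  ultimately show ?thesis
    unfolding R1_def R2_def by argo
qed

lemma subgrad_p_optimality_residual:
  "subgrad_p i + gf (x (Suc i)) + A (z (Suc i)) = (gf (x (Suc i)) - gf (x i)) - Gx (x (Suc i) - x i)
     + ((\<tau> - 1) * \<sigma>) *\<^sub>R A (residual (Suc i)) + \<sigma> *\<^sub>R A (Bt (y (Suc i) - y i))"
proof -
  have w: "At (x (Suc i)) + (Bt (y i) - c) = residual (Suc i) - Bt (y (Suc i) - y i)"
    unfolding residual_def linear_diff[OF Bt_linear] by (simp add: algebra_simps)
  show ?thesis
    unfolding subgrad_p_def w z_step_residual
    by (simp add: linear_add[OF A_lin] linear_diff[OF A_lin] linear_scale[OF A_lin] algebra_simps)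
qed

lemma subgrad_q_optimality_residual:
  "subgrad_q i + gg (y (Suc i)) + B (z (Suc i)) = (gg (y (Suc i)) - gg (y i)) - Hy (y (Suc i) - y i)
     + ((\<tau> - 1) * \<sigma>) *\<^sub>R B (residual (Suc i))"
  unfolding subgrad_q_def subgrad_q_residual z_step_residual
  by (simp add: linear_add[OF B_lin] linear_diff[OF B_lin] linear_scale[OF B_lin] algebra_simps)

definition iter_gap :: "nat \<Rightarrow> real" where
  "iter_gap j = (norm (x (Suc j) - x j))\<^sup>2 + (norm (y (Suc j) - y j))\<^sup>2 + (norm (residual (Suc j)))\<^sup>2"

lemma iter_gap_nonneg: "0 \<le> iter_gap j"
  by (simp add: iter_gap_def)

lemma subgrad_p_optimality_bound:
  obtains K where "0 \<le> K" "\<And>i. norm (subgrad_p i + gf (x (Suc i)) + A (z (Suc i)))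
    \<le> K * (norm (x (Suc i) - x i) + norm (y (Suc i) - y i) + norm (residual (Suc i)))"
proof -
  obtain Lf where Lf: "Lf-lipschitz_on UNIV gf"
    using gf_lip by blast
  obtain KG where KG: "KG > 0" "\<And>u. norm (Gx u) \<le> KG * norm u"
    using linear_bounded_pos[OF self_adjoint_linear[OF Gx_self_adjoint]] by blast
  obtain KA where KA: "KA > 0" "\<And>u. norm (A u) \<le> KA * norm u"
    using linear_bounded_pos[OF A_lin] by blast
  obtain KAB where KAB: "KAB > 0" "\<And>u. norm (A (Bt u)) \<le> KAB * norm u"
    using linear_bounded_pos[OF linear_compose[OF Bt_linear A_lin]] by (auto simp: o_def)
  define K where "K = Lf + KG + \<bar>\<tau> - 1\<bar> * \<sigma> * KA + \<sigma> * KAB"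
  have "norm (subgrad_p i + gf (x (Suc i)) + A (z (Suc i)))
      \<le> K * (norm (x (Suc i) - x i) + norm (y (Suc i) - y i) + norm (residual (Suc i)))" for i
  proof -
    have "norm (subgrad_p i + gf (x (Suc i)) + A (z (Suc i))) \<le> norm (gf (x (Suc i)) - gf (x i))
        + norm (Gx (x (Suc i) - x i)) + norm (((\<tau> - 1) * \<sigma>) *\<^sub>R A (residual (Suc i)))
        + norm (\<sigma> *\<^sub>R A (Bt (y (Suc i) - y i)))"
      unfolding subgrad_p_optimality_residual by (intro norm_triangle_le add_mono norm_triangle_ineq4 order_refl)
    also have "\<dots> \<le> Lf * norm (x (Suc i) - x i) + KG * norm (x (Suc i) - x i)
        + \<bar>\<tau> - 1\<bar> * \<sigma> * KA * norm (residual (Suc i)) + \<sigma> * KAB * norm (y (Suc i) - y i)"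
      using lipschitz_onD[OF Lf, of "x (Suc i)" "x i"] KG(2) \<sigma>
        norm_scaleR_linear_le[OF KA(2) less_imp_le[OF KA(1)], of "(\<tau> - 1) * \<sigma>"]
        norm_scaleR_linear_le[OF KAB(2) less_imp_le[OF KAB(1)], of \<sigma>]
      by (intro add_mono) (auto simp: dist_norm abs_mult)
    also have "\<dots> \<le> K * (norm (x (Suc i) - x i) + norm (y (Suc i) - y i) + norm (residual (Suc i)))"
      unfolding K_def using lipschitz_on_nonneg[OF Lf] KG(1) KA(1) KAB(1) \<sigma>
      by (simp add: algebra_simps add_mono mult_nonneg_nonneg)
    finally show ?thesis .
  qed
  moreover have "0 \<le> K"
    unfolding K_def using lipschitz_on_nonneg[OF Lf] KG(1) KA(1) KAB(1) \<sigma> by simp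
  ultimately show ?thesis
    using that by blast
qed

lemma subgrad_q_optimality_bound:
  obtains K where "0 \<le> K" "\<And>i. norm (subgrad_q i + gg (y (Suc i)) + B (z (Suc i)))
    \<le> K * (norm (x (Suc i) - x i) + norm (y (Suc i) - y i) + norm (residual (Suc i)))"
proof -
  obtain Lg where Lg: "Lg-lipschitz_on UNIV gg"
    using gg_lip by blast
  obtain KH where KH: "KH > 0" "\<And>u. norm (Hy u) \<le> KH * norm u"
    using linear_bounded_pos[OF self_adjoint_linear[OF Hy_self_adjoint]] by blast
  obtain KB where KB: "KB > 0" "\<And>u. norm (B u) \<le> KB * norm u"
    using linear_bounded_pos[OF B_lin] by blast
  define K where "K = Lg + KH + \<bar>\<tau> - 1\<bar> * \<sigma> * KB"
  have "norm (subgrad_q i + gg (y (Suc i)) + B (z (Suc i)))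
      \<le> K * (norm (x (Suc i) - x i) + norm (y (Suc i) - y i) + norm (residual (Suc i)))" for i
  proof -
    have "norm (subgrad_q i + gg (y (Suc i)) + B (z (Suc i))) \<le> norm (gg (y (Suc i)) - gg (y i))
        + norm (Hy (y (Suc i) - y i)) + norm (((\<tau> - 1) * \<sigma>) *\<^sub>R B (residual (Suc i)))"
      unfolding subgrad_q_optimality_residual by (intro norm_triangle_le add_mono norm_triangle_ineq4 order_refl)
    also have "\<dots> \<le> Lg * norm (y (Suc i) - y i) + KH * norm (y (Suc i) - y i)
        + \<bar>\<tau> - 1\<bar> * \<sigma> * KB * norm (residual (Suc i))"
      using lipschitz_onD[OF Lg, of "y (Suc i)" "y i"] KH(2) \<sigma>
        norm_scaleR_linear_le[OF KB(2) less_imp_le[OF KB(1)], of "(\<tau> - 1) * \<sigma>"]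
      by (intro add_mono) (auto simp: dist_norm abs_mult)
    also have "\<dots> \<le> K * (norm (x (Suc i) - x i) + norm (y (Suc i) - y i) + norm (residual (Suc i)))"
      unfolding K_def using lipschitz_on_nonneg[OF Lg] KH(1) KB(1) \<sigma>
      by (simp add: algebra_simps add_mono mult_nonneg_nonneg)
    finally show ?thesis .
  qed
  moreover have "0 \<le> K"
    unfolding K_def using lipschitz_on_nonneg[OF Lg] KH(1) KB(1) \<sigma> by simp
  ultimately show ?thesis
    using that by blast
qed

lemma subgrad_optimality_square_bound:
  obtains C where "0 \<le> C"
    "\<And>i. (norm (subgrad_p i + gf (x (Suc i)) + A (z (Suc i))))\<^sup>2 \<le> C * iter_gap i"
    "\<And>i. (norm (subgrad_q i + gg (y (Suc i)) + B (z (Suc i))))\<^sup>2 \<le> C * iter_gap i"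
proof -
  obtain Kx where Kx: "0 \<le> Kx" "\<And>i. norm (subgrad_p i + gf (x (Suc i)) + A (z (Suc i)))
    \<le> Kx * (norm (x (Suc i) - x i) + norm (y (Suc i) - y i) + norm (residual (Suc i)))"
    using subgrad_p_optimality_bound by blast
  obtain Ky where Ky: "0 \<le> Ky" "\<And>i. norm (subgrad_q i + gg (y (Suc i)) + B (z (Suc i)))
    \<le> Ky * (norm (x (Suc i) - x i) + norm (y (Suc i) - y i) + norm (residual (Suc i)))"
    using subgrad_q_optimality_bound by blast
  define C where "C = 3 * Kx\<^sup>2 + 3 * Ky\<^sup>2"
  have "3 * Kx\<^sup>2 * iter_gap i \<le> C * iter_gap i" "3 * Ky\<^sup>2 * iter_gap i \<le> C * iter_gap i" for i
    unfolding C_def using iter_gap_nonneg[of i] by (auto intro!: mult_right_mono)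
  then show ?thesis
    using that[of C] square_le_three_sum_squares[OF norm_ge_zero Kx(2) Kx(1)]
      square_le_three_sum_squares[OF norm_ge_zero Ky(2) Ky(1)]
    unfolding C_def iter_gap_def by (smt (verit) norm_ge_zero zero_le_power2)
qed


definition objective where
  "objective u v = real_of_ereal (p u) + f u + real_of_ereal (q v) + g v"

end


locale majorized_ipadmm_kkt = majorized_ipadmm +
  fixes xb yb zb
  assumes kkt_x: "0 \<in> (\<lambda>v. v + gf xb + A zb) ` subdiff p xb"
    and kkt_y: "0 \<in> (\<lambda>w. w + gg yb + B zb) ` subdiff q yb"
    and kkt_feasible: "adjoint A xb + adjoint B yb = c"
begin

lemma kkt_x_subdiff: "- (gf xb + A zb) \<in> subdiff p xb"
  using kkt_x by (simp add: zero_in_shifted_image_iff)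

lemma kkt_y_subdiff: "- (gg yb + B zb) \<in> subdiff q yb"
  using kkt_y by (simp add: zero_in_shifted_image_iff)

lemma residual_kkt_difference: "residual k = At (x k - xb) + Bt (y k - yb)"
  unfolding residual_def linear_diff[OF At_linear] linear_diff[OF Bt_linear] using kkt_feasible
  by (simp add: algebra_simps)

lemma kkt_monotonicity_step:
  fixes k :: nat
  defines "dx \<equiv> x (Suc k) - x k" and "dy \<equiv> y (Suc k) - y k"
  shows "((norm (z (Suc k) - zb))\<^sup>2 - (norm (z k - zb))\<^sup>2) / (2 * \<tau> * \<sigma>)
     + (qf Gx (x (Suc k) - xb) - qf Gx (x k - xb)) / 2 + (qf Hy (y (Suc k) - yb) - qf Hy (y k - yb)) / 2
     + \<sigma> / 2 * ((norm (Bt (y (Suc k) - yb)))\<^sup>2 - (norm (Bt (y k - yb)))\<^sup>2)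
     + qf Sf (x (Suc k) - xb) / 2 + qf Sf (x k - xb) / 2 - qf Shf dx / 2 + (qf Shf dx + qf S dx) / 2
     + qf Sg (y (Suc k) - yb) / 2 + qf Sg (y k - yb) / 2 - qf Shg dy / 2 + qf Hy dy / 2
     + (1 - \<tau> / 2) * \<sigma> * (norm (residual (Suc k)))\<^sup>2 - \<sigma> * (residual (Suc k) \<bullet> Bt dy)
     + \<sigma> / 2 * (norm (Bt dy))\<^sup>2 \<le> 0"
proof -
  define xe1 where "xe1 = x (Suc k) - xb"
  define xe0 where "xe0 = x k - xb"
  define ye1 where "ye1 = y (Suc k) - yb"
  define ye0 where "ye0 = y k - yb"
  define w where "w = At (x (Suc k)) + (Bt (y k) - c)"
  define R where "R = residual (Suc k)"
  have "0 \<le> (subgrad_p k - - (gf xb + A zb)) \<bullet> xe1"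
    unfolding xe1_def by (rule subdiff_monotone[OF subgrad_p_in_subdiff kkt_x_subdiff p_not_minf])
  moreover have "(subgrad_p k - - (gf xb + A zb)) \<bullet> xe1
      = - ((gf (x k) - gf xb) \<bullet> xe1) - Gx dx \<bullet> xe1 - (z k - zb) \<bullet> At xe1 - \<sigma> * (w \<bullet> At xe1)"
    unfolding subgrad_p_def w_def dx_def
    by (simp add: inner_add_left inner_diff_left adjoint_works[OF A_lin, symmetric])
  moreover have "0 \<le> (subgrad_q k - - (gg yb + B zb)) \<bullet> ye1"
    unfolding ye1_def by (rule subdiff_monotone[OF subgrad_q_in_subdiff kkt_y_subdiff q_not_minf])
  moreover have "(subgrad_q k - - (gg yb + B zb)) \<bullet> ye1
      = - ((gg (y k) - gg yb) \<bullet> ye1) - Hy dy \<bullet> ye1 - (z k - zb) \<bullet> Bt ye1 - \<sigma> * (R \<bullet> Bt ye1)"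
    unfolding subgrad_q_def dy_def subgrad_q_residual R_def
    by (simp add: inner_add_left inner_diff_left adjoint_works[OF B_lin, symmetric])
  moreover have "qf Sf xe1 / 2 + qf Sf xe0 / 2 - qf Shf dx / 2 \<le> (gf (x k) - gf xb) \<bullet> xe1"
    unfolding xe1_def xe0_def dx_def
    by (rule majorized_gradient_three_point[OF f_maj self_adjoint_linear[OF Sf(1)]])
  moreover have "qf Sg ye1 / 2 + qf Sg ye0 / 2 - qf Shg dy / 2 \<le> (gg (y k) - gg yb) \<bullet> ye1"
    unfolding ye1_def ye0_def dy_def
    by (rule majorized_gradient_three_point[OF g_maj self_adjoint_linear[OF Sg(1)]])
  moreover have "Gx dx \<bullet> xe1 = (qf Gx xe1 + qf Gx dx - qf Gx xe0) / 2"
    using qf_polarization[OF Gx_self_adjoint, of dx xe1] by (simp add: xe1_def xe0_def dx_def)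
  moreover have "Hy dy \<bullet> ye1 = (qf Hy ye1 + qf Hy dy - qf Hy ye0) / 2"
    using qf_polarization[OF Hy_self_adjoint, of dy ye1] by (simp add: ye1_def ye0_def dy_def)
  moreover have "qf Gx dx = qf Shf dx + qf S dx"
    by (rule qf_fun_add)
  moreover have "(z k - zb) \<bullet> At xe1 + \<sigma> * (w \<bullet> At xe1) + (z k - zb) \<bullet> Bt ye1 + \<sigma> * (R \<bullet> Bt ye1)
     = ((norm (z (Suc k) - zb))\<^sup>2 - (norm (z k - zb))\<^sup>2) / (2 * \<tau> * \<sigma>) + (1 - \<tau> / 2) * \<sigma> * (norm R)\<^sup>2
       - \<sigma> * (R \<bullet> Bt dy) + \<sigma> / 2 * ((norm (Bt ye1))\<^sup>2 - (norm (Bt ye0))\<^sup>2 + (norm (Bt dy))\<^sup>2)"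
  proof (rule multiplier_update_identity)
    show "R = At xe1 + Bt ye1"
      unfolding R_def xe1_def ye1_def by (rule residual_kkt_difference)
    show "w = R - Bt dy"
      unfolding R_def residual_def w_def dy_def linear_diff[OF Bt_linear] by (simp add: algebra_simps)
    show "Bt dy = Bt ye1 - Bt ye0"
      unfolding dy_def ye1_def ye0_def linear_diff[OF Bt_linear] by simp
    show "z (Suc k) - zb = z k - zb + (\<tau> * \<sigma>) *\<^sub>R R"
      unfolding R_def z_step_residual by simp
    show "\<tau> * \<sigma> \<noteq> 0"
      using \<tau> \<sigma> by simp
  qed
  moreover have "\<sigma> / 2 * ((norm (Bt ye1))\<^sup>2 - (norm (Bt ye0))\<^sup>2 + (norm (Bt dy))\<^sup>2)
      = \<sigma> / 2 * ((norm (Bt ye1))\<^sup>2 - (norm (Bt ye0))\<^sup>2) + \<sigma> / 2 * (norm (Bt dy))\<^sup>2"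
    by (simp add: algebra_simps)
  ultimately show ?thesis
    unfolding xe1_def[symmetric] xe0_def[symmetric] ye1_def[symmetric] ye0_def[symmetric] R_def[symmetric]
    by argo
qed

definition lyapunov :: "nat \<Rightarrow> real" where
  "lyapunov j = (norm (z (Suc j) - zb))\<^sup>2 / (2 * \<tau> * \<sigma>) + qf Gx (x (Suc j) - xb) / 2
     + qf Hy (y (Suc j) - yb) / 2 + \<sigma> / 2 * (norm (Bt (y (Suc j) - yb)))\<^sup>2
     + \<alpha> / 2 * qf Hy (y (Suc j) - y j) + \<kappa> * (norm (residual (Suc j)))\<^sup>2"

lemma lyapunov_nonneg: "0 \<le> lyapunov j"
  unfolding lyapunov_def using qf_Gx_nonneg qf_Hy_nonneg kappa_nonneg alpha_pos \<tau> \<sigma>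
  by (intro add_nonneg_nonneg mult_nonneg_nonneg divide_nonneg_pos) auto

lemma lyapunov_decrease:
  fixes j :: nat
  defines "dx \<equiv> x (Suc (Suc j)) - x (Suc j)" and "dy \<equiv> y (Suc (Suc j)) - y (Suc j)"
  shows "(qf Sf dx / 2 + qf S dx + (1 - \<alpha>) * \<sigma> / 2 * (norm (At dx))\<^sup>2) / 2
     + (qf Sg dy / 2 + qf T dy + (1 - \<delta>) * \<alpha> * \<sigma> * (norm (Bt dy))\<^sup>2) / 2
     + \<gamma> * (norm (residual (Suc (Suc j))))\<^sup>2 \<le> lyapunov j - lyapunov (Suc j)"
proof -
  have CS: "(1 - \<tau>) * \<sigma> * (residual (Suc j) \<bullet> Bt dy) \<le> \<sigma> * \<delta> / 2 * (norm (Bt dy))\<^sup>2 + \<beta> * (norm (residual (Suc j)))\<^sup>2"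
    unfolding \<delta>_def \<beta>_def by (rule young_multiplier_bound[OF \<tau> \<sigma>])
  have "At dx = (residual (Suc (Suc j)) - Bt dy) - residual (Suc j)"
    unfolding dx_def dy_def residual_def linear_diff[OF At_linear] linear_diff[OF Bt_linear] by (simp add: algebra_simps)
  then have "(norm (At dx))\<^sup>2 \<le> 2 * (norm (residual (Suc (Suc j)) - Bt dy))\<^sup>2 + 2 * (norm (residual (Suc j)))\<^sup>2"
    using norm_diff_square_le by metis
  then have AX: "(norm (At dx))\<^sup>2 \<le> 2 * ((norm (residual (Suc (Suc j))))\<^sup>2 - 2 * (residual (Suc (Suc j)) \<bullet> Bt dy)
      + (norm (Bt dy))\<^sup>2) + 2 * (norm (residual (Suc j)))\<^sup>2"
    unfolding norm_diff_square[of "residual (Suc (Suc j))" "Bt dy"] .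
  have px: "qf Sf dx / 2 \<le> qf Sf (x (Suc (Suc j)) - xb) + qf Sf (x (Suc j) - xb)"
    using psd_qf_diff_le[OF Sf, of "x (Suc (Suc j)) - xb" "x (Suc j) - xb"] unfolding dx_def by simp
  have py: "qf Sg dy / 2 \<le> qf Sg (y (Suc (Suc j)) - yb) + qf Sg (y (Suc j) - yb)"
    using psd_qf_diff_le[OF Sg, of "y (Suc (Suc j)) - yb" "y (Suc j) - yb"] unfolding dy_def by simp
  have HYt: "qf Hy dy = qf Shg dy + qf T dy"
    by (rule qf_fun_add)
  note C = lyapunov_combination[OF kkt_monotonicity_step[of "Suc j", folded dx_def dy_def] HYt y_monotonicity_step[of j, folded dy_def] CS AX px py
      alpha_pos[THEN less_imp_le] \<alpha>(2) \<sigma> \<tau>]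
  show ?thesis
    using C unfolding lyapunov_def \<kappa>_def[symmetric] \<gamma>_def[symmetric] dx_def dy_def by simp
qed

lemma lyapunov_sufficient_decrease:
  obtains \<mu> where "\<mu> > 0" "\<And>j. \<mu> * iter_gap (Suc j) \<le> lyapunov j - lyapunov (Suc j)"
proof -
  obtain m1 where m1: "m1 > 0" "\<And>u. m1 * (norm u)\<^sup>2 \<le> qf Sf u / 2 + qf S u + (1 - \<alpha>) * \<sigma> / 2 * (norm (At u))\<^sup>2"
    using Hf_coercive by blast
  obtain m2 where m2: "m2 > 0" "\<And>v. m2 * (norm v)\<^sup>2 \<le> qf Sg v / 2 + qf T v + (1 - \<delta>) * \<alpha> * \<sigma> * (norm (Bt v))\<^sup>2"
    using Mg_coercive by blast
  define \<mu> where "\<mu> = min (min (m1 / 2) (m2 / 2)) \<gamma>"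
  have "\<mu> * iter_gap (Suc j) \<le> lyapunov j - lyapunov (Suc j)" for j
  proof -
    define a where "a = (norm (x (Suc (Suc j)) - x (Suc j)))\<^sup>2"
    define b where "b = (norm (y (Suc (Suc j)) - y (Suc j)))\<^sup>2"
    define d where "d = (norm (residual (Suc (Suc j))))\<^sup>2"
    have "m1 / 2 * a + m2 / 2 * b + \<gamma> * d \<le> lyapunov j - lyapunov (Suc j)"
      using lyapunov_decrease[of j] m1(2)[of "x (Suc (Suc j)) - x (Suc j)"] m2(2)[of "y (Suc (Suc j)) - y (Suc j)"]
      unfolding a_def b_def d_def by argo
    moreover have "\<mu> * a \<le> m1 / 2 * a" "\<mu> * b \<le> m2 / 2 * b" "\<mu> * d \<le> \<gamma> * d"
      unfolding a_def b_def d_def by (intro mult_right_mono; simp add: \<mu>_def)+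
    moreover have "\<mu> * iter_gap (Suc j) = \<mu> * a + \<mu> * b + \<mu> * d"
      unfolding iter_gap_def a_def b_def d_def by (simp add: algebra_simps)
    ultimately show ?thesis
      by linarith
  qed
  moreover have "\<mu> > 0"
    using m1 m2 gamma_pos by (simp add: \<mu>_def)
  ultimately show ?thesis
    using that by blast
qed

lemma iter_gap_summable: "summable iter_gap"
proof -
  obtain \<mu> where "\<mu> > 0" "\<And>j. \<mu> * iter_gap (Suc j) \<le> lyapunov j - lyapunov (Suc j)"
    using lyapunov_sufficient_decrease by blast
  then have "summable (\<lambda>j. iter_gap (Suc j))"
    using iter_gap_nonneg lyapunov_nonneg by (intro summable_of_sufficient_decrease[where V=lyapunov])
  then show ?thesis
    by (simp only: summable_Suc_iff)
qed


lemma kkt_residual_smallo: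
  "(\<lambda>k. Min ((\<lambda>i. (infdist 0 ((\<lambda>v. v + gf (x (Suc i)) + A (z (Suc i))) ` subdiff p (x (Suc i))))\<^sup>2
                 + (infdist 0 ((\<lambda>w. w + gg (y (Suc i)) + B (z (Suc i))) ` subdiff q (y (Suc i))))\<^sup>2
                 + (norm (At (x (Suc i)) + Bt (y (Suc i)) - c))\<^sup>2) ` {1..k}))
     \<in> o(\<lambda>k. 1 / real k)"
proof -
  obtain C where C: "0 \<le> C"
    "\<And>i. (norm (subgrad_p i + gf (x (Suc i)) + A (z (Suc i))))\<^sup>2 \<le> C * iter_gap i"
    "\<And>i. (norm (subgrad_q i + gg (y (Suc i)) + B (z (Suc i))))\<^sup>2 \<le> C * iter_gap i"
    using subgrad_optimality_square_bound by blast
  have "(infdist 0 ((\<lambda>v. v + gf (x (Suc i)) + A (z (Suc i))) ` subdiff p (x (Suc i))))\<^sup>2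
      + (infdist 0 ((\<lambda>w. w + gg (y (Suc i)) + B (z (Suc i))) ` subdiff q (y (Suc i))))\<^sup>2
      + (norm (At (x (Suc i)) + Bt (y (Suc i)) - c))\<^sup>2 \<le> (2 * C + 1) * iter_gap i" for i
  proof -
    have "(infdist 0 ((\<lambda>v. v + gf (x (Suc i)) + A (z (Suc i))) ` subdiff p (x (Suc i))))\<^sup>2 \<le> C * iter_gap i"
      using infdist_shifted_image_square_le[OF subgrad_p_in_subdiff[of i]] C(2)[of i] by (rule order_trans)
    moreover have "(infdist 0 ((\<lambda>w. w + gg (y (Suc i)) + B (z (Suc i))) ` subdiff q (y (Suc i))))\<^sup>2 \<le> C * iter_gap i"
      using infdist_shifted_image_square_le[OF subgrad_q_in_subdiff[of i]] C(3)[of i] by (rule order_trans)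
    moreover have "(norm (At (x (Suc i)) + Bt (y (Suc i)) - c))\<^sup>2 \<le> iter_gap i"
      by (simp add: iter_gap_def residual_def)
    ultimately show ?thesis
      by (simp add: algebra_simps)
  qed
  then show ?thesis
    by (intro Min_smallo_inverse[OF iter_gap_nonneg iter_gap_summable]) auto
qed

lemma objective_gap_upper:
  "objective (x (Suc j)) (y (Suc j)) - objective xb yb
     \<le> (subgrad_p j + gf (x (Suc j)) + A (z (Suc j))) \<bullet> (x (Suc j) - xb)
       + (subgrad_q j + gg (y (Suc j)) + B (z (Suc j))) \<bullet> (y (Suc j) - yb) - z (Suc j) \<bullet> residual (Suc j)"
proof -
  have "real_of_ereal (p (x (Suc j))) + f (x (Suc j)) + (subgrad_p j + gf (x (Suc j))) \<bullet> (xb - x (Suc j))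
      \<le> real_of_ereal (p xb) + f xb"
    using subgradient_inequality_plus_smooth[OF subgrad_p_in_subdiff p_not_minf _ f_maj(1) Sf(2)] kkt_x_subdiff
    by (simp add: subdiff_def)
  moreover have "real_of_ereal (q (y (Suc j))) + g (y (Suc j)) + (subgrad_q j + gg (y (Suc j))) \<bullet> (yb - y (Suc j))
      \<le> real_of_ereal (q yb) + g yb"
    using subgradient_inequality_plus_smooth[OF subgrad_q_in_subdiff q_not_minf _ g_maj(1) Sg(2)] kkt_y_subdiff
    by (simp add: subdiff_def)
  moreover have "z (Suc j) \<bullet> residual (Suc j) = A (z (Suc j)) \<bullet> (x (Suc j) - xb) + B (z (Suc j)) \<bullet> (y (Suc j) - yb)"
    using residual_kkt_difference[of "Suc j"]
    by (simp add: inner_add_right adjoint_works[OF A_lin] adjoint_works[OF B_lin])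
  ultimately show ?thesis
    unfolding objective_def inner_add_left inner_diff_right by linarith
qed

lemma objective_gap_lower:
  "- (zb \<bullet> residual (Suc j)) \<le> objective (x (Suc j)) (y (Suc j)) - objective xb yb"
proof -
  have "real_of_ereal (p xb) + f xb + (- (gf xb + A zb) + gf xb) \<bullet> (x (Suc j) - xb)
      \<le> real_of_ereal (p (x (Suc j))) + f (x (Suc j))"
    by (rule subgradient_inequality_plus_smooth[OF kkt_x_subdiff p_not_minf p_iterate_finite f_maj(1) Sf(2)])
  moreover have "real_of_ereal (q yb) + g yb + (- (gg yb + B zb) + gg yb) \<bullet> (y (Suc j) - yb)
      \<le> real_of_ereal (q (y (Suc j))) + g (y (Suc j))"
    by (rule subgradient_inequality_plus_smooth[OF kkt_y_subdiff q_not_minf q_iterate_finite g_maj(1) Sg(2)])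
  moreover have "zb \<bullet> residual (Suc j) = A zb \<bullet> (x (Suc j) - xb) + B zb \<bullet> (y (Suc j) - yb)"
    using residual_kkt_difference[of "Suc j"]
    by (simp add: inner_add_right adjoint_works[OF A_lin] adjoint_works[OF B_lin])
  ultimately show ?thesis
    unfolding objective_def inner_diff_right inner_minus_left inner_add_left by linarith
qed


lemma lyapunov_le_initial: "lyapunov j \<le> lyapunov 0"
proof -
  obtain \<mu> where "\<mu> > 0" "\<And>j. \<mu> * iter_gap (Suc j) \<le> lyapunov j - lyapunov (Suc j)"
    using lyapunov_sufficient_decrease by blast
  then have "lyapunov (Suc j) \<le> lyapunov j" for j
    using iter_gap_nonneg[of "Suc j"] by (smt (verit) mult_nonneg_nonneg)
  then have "decseq lyapunov"
    by (rule decseq_SucI)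
  then show ?thesis
    by (simp add: decseq_def)
qed

lemma lyapunov_component_bounds:
  shows "(norm (z (Suc j) - zb))\<^sup>2 \<le> 2 * \<tau> * \<sigma> * lyapunov 0"
    and "qf Gx (x (Suc j) - xb) \<le> 2 * lyapunov 0"
    and "qf Hy (y (Suc j) - yb) + \<sigma> * (norm (Bt (y (Suc j) - yb)))\<^sup>2 \<le> 4 * lyapunov 0"
proof -
  have nonneg: "0 \<le> qf Gx (x (Suc j) - xb)" "0 \<le> qf Hy (y (Suc j) - yb)" "0 \<le> \<sigma> / 2 * (norm (Bt (y (Suc j) - yb)))\<^sup>2"
      "0 \<le> \<alpha> / 2 * qf Hy (y (Suc j) - y j)" "0 \<le> \<kappa> * (norm (residual (Suc j)))\<^sup>2"
      "0 \<le> (norm (z (Suc j) - zb))\<^sup>2 / (2 * \<tau> * \<sigma>)"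
    using qf_Gx_nonneg qf_Hy_nonneg \<sigma> alpha_pos kappa_nonneg \<tau> by auto
  have V: "lyapunov j \<le> lyapunov 0"
    by (rule lyapunov_le_initial)
  then have "(norm (z (Suc j) - zb))\<^sup>2 / (2 * \<tau> * \<sigma>) \<le> lyapunov 0"
    using nonneg unfolding lyapunov_def[of j] by linarith
  then show "(norm (z (Suc j) - zb))\<^sup>2 \<le> 2 * \<tau> * \<sigma> * lyapunov 0"
    using \<tau> \<sigma> by (simp add: divide_le_eq mult.commute)
  show "qf Gx (x (Suc j) - xb) \<le> 2 * lyapunov 0"
    using V nonneg unfolding lyapunov_def[of j] by linarith
  show "qf Hy (y (Suc j) - yb) + \<sigma> * (norm (Bt (y (Suc j) - yb)))\<^sup>2 \<le> 4 * lyapunov 0"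
    using V nonneg unfolding lyapunov_def[of j] by linarith
qed

lemma iterates_bounded:
  obtains M where "\<And>j. norm (x (Suc j) - xb) \<le> M" "\<And>j. norm (y (Suc j) - yb) \<le> M" "\<And>j. norm (z (Suc j)) \<le> M"
proof -
  define V where "V = lyapunov 0"
  define R where "R = suminf iter_gap"
  obtain m1 where m1: "m1 > 0" "\<And>u. m1 * (norm u)\<^sup>2 \<le> qf Gx u + \<sigma> * (norm (At u))\<^sup>2"
    using Gx_At_coercive by blast
  obtain m2 where m2: "m2 > 0" "\<And>v. m2 * (norm v)\<^sup>2 \<le> qf Hy v + \<sigma> * (norm (Bt v))\<^sup>2"
    using Hy_Bt_coercive by blast
  define Mx where "Mx = sqrt ((10 * V + 2 * \<sigma> * R) / m1)"
  define My where "My = sqrt (4 * V / m2)"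
  define Mz where "Mz = norm zb + sqrt (2 * \<tau> * \<sigma> * V)"
  have bounds: "norm (x (Suc j) - xb) \<le> Mx" "norm (y (Suc j) - yb) \<le> My" "norm (z (Suc j)) \<le> Mz" for j
  proof -
    note V = lyapunov_component_bounds[of j, folded V_def]
    have "iter_gap j \<le> R"
      using sum_le_suminf[OF iter_gap_summable, of "{j}"] iter_gap_nonneg unfolding R_def by simp
    moreover have "(norm (residual (Suc j)))\<^sup>2 \<le> iter_gap j"
      unfolding iter_gap_def by simp
    ultimately have "\<sigma> * (norm (residual (Suc j)))\<^sup>2 \<le> \<sigma> * R"
      using \<sigma> by (intro mult_left_mono) simp_all
    moreover have "\<sigma> * (norm (At (x (Suc j) - xb)))\<^sup>2
        \<le> \<sigma> * (2 * (norm (residual (Suc j)))\<^sup>2 + 2 * (norm (Bt (y (Suc j) - yb)))\<^sup>2)"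
      using residual_kkt_difference[of "Suc j"] norm_diff_square_le[of "residual (Suc j)" "Bt (y (Suc j) - yb)"] \<sigma>
      by (intro mult_left_mono) simp_all
    ultimately have "m1 * (norm (x (Suc j) - xb))\<^sup>2 \<le> 10 * V + 2 * \<sigma> * R"
      using m1(2)[of "x (Suc j) - xb"] V(2,3) qf_Hy_nonneg[of "y (Suc j) - yb"] by (simp add: algebra_simps)
    then show "norm (x (Suc j) - xb) \<le> Mx"
      unfolding Mx_def using m1(1) by (intro real_le_rsqrt) (simp add: field_simps)
    have "m2 * (norm (y (Suc j) - yb))\<^sup>2 \<le> 4 * V"
      using m2(2)[of "y (Suc j) - yb"] V(3) by linarith
    then show "norm (y (Suc j) - yb) \<le> My"
      unfolding My_def using m2(1) by (intro real_le_rsqrt) (simp add: field_simps)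
    have "norm (z (Suc j)) \<le> norm zb + norm (z (Suc j) - zb)"
      by (metis norm_triangle_sub add.commute)
    then show "norm (z (Suc j)) \<le> Mz"
      unfolding Mz_def using real_le_rsqrt[OF V(1)] by linarith
  qed
  have "0 \<le> Mx" "0 \<le> My" "0 \<le> Mz"
    using bounds(1-3)[of 0] norm_ge_zero order_trans by blast+
  then show ?thesis
    using bounds that[of "Mx + My + Mz"] by (meson add_increasing add_increasing2 order_trans)
qed

lemma objective_gap_bound:
  obtains K where "0 \<le> K"
    "\<And>j. \<bar>objective (x (Suc j)) (y (Suc j)) - objective xb yb\<bar> \<le> K * sqrt (iter_gap j)"
proof -
  obtain M where M: "\<And>j. norm (x (Suc j) - xb) \<le> M" "\<And>j. norm (y (Suc j) - yb) \<le> M" "\<And>j. norm (z (Suc j)) \<le> M"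
    using iterates_bounded by blast
  obtain C where C: "0 \<le> C"
    "\<And>i. (norm (subgrad_p i + gf (x (Suc i)) + A (z (Suc i))))\<^sup>2 \<le> C * iter_gap i"
    "\<And>i. (norm (subgrad_q i + gg (y (Suc i)) + B (z (Suc i))))\<^sup>2 \<le> C * iter_gap i"
    using subgrad_optimality_square_bound by blast
  have M0: "0 \<le> M"
    using M(3)[of 0] norm_ge_zero order_trans by blast
  define K where "K = 2 * M * sqrt C + M + norm zb"
  have "\<bar>objective (x (Suc j)) (y (Suc j)) - objective xb yb\<bar> \<le> K * sqrt (iter_gap j)" for j
  proof -
    define s where "s = sqrt (iter_gap j)"
    have s: "norm (subgrad_p j + gf (x (Suc j)) + A (z (Suc j))) \<le> sqrt C * s"
      "norm (subgrad_q j + gg (y (Suc j)) + B (z (Suc j))) \<le> sqrt C * s" "norm (residual (Suc j)) \<le> s"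
      using C(2,3)[of j] iter_gap_nonneg[of j] unfolding s_def
      by (auto simp: iter_gap_def real_sqrt_mult[symmetric] intro!: real_le_rsqrt)
    have CS: "\<bar>u \<bullet> v\<bar> \<le> a * b" if "norm u \<le> a" "norm v \<le> b" for u v :: "'v::real_inner" and a b
      using Cauchy_Schwarz_ineq2[of u v] that by (meson mult_mono norm_ge_zero order_trans)
    have "\<bar>(subgrad_p j + gf (x (Suc j)) + A (z (Suc j))) \<bullet> (x (Suc j) - xb)\<bar> \<le> sqrt C * s * M"
      "\<bar>(subgrad_q j + gg (y (Suc j)) + B (z (Suc j))) \<bullet> (y (Suc j) - yb)\<bar> \<le> sqrt C * s * M"
      "\<bar>z (Suc j) \<bullet> residual (Suc j)\<bar> \<le> M * s" "\<bar>zb \<bullet> residual (Suc j)\<bar> \<le> norm zb * s"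
      by (rule CS[OF s(1) M(1)] CS[OF s(2) M(2)] CS[OF M(3) s(3)] CS[OF order_refl s(3)])+
    moreover have "K * s = 2 * (sqrt C * s * M) + M * s + norm zb * s"
      by (simp add: K_def algebra_simps)
    moreover have "0 \<le> sqrt C * s * M" "0 \<le> M * s" "0 \<le> norm zb * s"
      using M0 C(1) iter_gap_nonneg[of j] by (simp_all add: s_def)
    ultimately show ?thesis
      using objective_gap_upper[of j] objective_gap_lower[of j] unfolding s_def[symmetric] abs_le_iff
      by linarith
  qed
  moreover have "0 \<le> K"
    unfolding K_def using M0 C(1) by simp
  ultimately show ?thesis
    using that by blast
qed

lemma objective_gap_smallo:
  "(\<lambda>k. Min ((\<lambda>i. \<bar>objective (x i) (y i) - objective xb yb\<bar>) ` {1..k})) \<in> o(\<lambda>k. 1 / sqrt (real k))"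
proof -
  obtain K where K: "0 \<le> K"
    "\<And>j. \<bar>objective (x (Suc j)) (y (Suc j)) - objective xb yb\<bar> \<le> K * sqrt (iter_gap j)"
    using objective_gap_bound by blast
  have "\<bar>objective (x i) (y i) - objective xb yb\<bar> \<le> K * sqrt (iter_gap (i - 1))" if "1 \<le> i" for i
    using K(2)[of "i - 1"] that by simp
  moreover have "summable (\<lambda>i. iter_gap (i - 1))"
    using iter_gap_summable by (subst summable_Suc_iff[symmetric]) simp
  ultimately show ?thesis
    using iter_gap_nonneg by (intro Min_smallo_inverse_sqrt) auto
qed

end


theorem theorem5p1:
  fixes p :: "'x::euclidean_space \<Rightarrow> ereal" and q :: "'y::euclidean_space \<Rightarrow> ereal"
    and f :: "'x \<Rightarrow> real" and g :: "'y \<Rightarrow> real"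
    and gf :: "'x \<Rightarrow> 'x" and gg :: "'y \<Rightarrow> 'y"
    and A :: "'z::euclidean_space \<Rightarrow> 'x" and B :: "'z \<Rightarrow> 'y" and c :: 'z
    and Sf Shf S :: "'x \<Rightarrow> 'x" and Sg Shg T :: "'y \<Rightarrow> 'y"
    and \<sigma> \<tau> \<alpha> :: real
    and x :: "nat \<Rightarrow> 'x" and y :: "nat \<Rightarrow> 'y" and z :: "nat \<Rightarrow> 'z"
  assumes p: "closed_proper_convex p" and q: "closed_proper_convex q"
    and f_conv: "convex_on UNIV f" and g_conv: "convex_on UNIV g"
    and f_grad: "\<And>u. (f has_derivative (\<lambda>h. gf u \<bullet> h)) (at u)"
    and g_grad: "\<And>u. (g has_derivative (\<lambda>h. gg u \<bullet> h)) (at u)"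
    and gf_lip: "\<exists>L. L-lipschitz_on UNIV gf"
    and gg_lip: "\<exists>L. L-lipschitz_on UNIV gg"
    and A_lin: "linear A" and B_lin: "linear B"
    and CQ: "\<exists>x0 y0. (x0, y0) \<in> rel_interior (edom p \<times> edom q) \<and>
                     adjoint A x0 + adjoint B y0 = c"
    and Sf: "self_adjoint Sf" "psd Sf" and Shf: "self_adjoint Shf" "psd (\<lambda>u. Shf u - Sf u)"
    and Sg: "self_adjoint Sg" "psd Sg" and Shg: "self_adjoint Shg" "psd (\<lambda>u. Shg u - Sg u)"
    and f_maj: "\<And>u u'. f u' + (u - u') \<bullet> gf u' + qf Sf (u - u') / 2 \<le> f u"
               "\<And>u u'. f u \<le> f u' + (u - u') \<bullet> gf u' + qf Shf (u - u') / 2"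
    and g_maj: "\<And>v v'. g v' + (v - v') \<bullet> gg v' + qf Sg (v - v') / 2 \<le> g v"
               "\<And>v v'. g v \<le> g v' + (v - v') \<bullet> gg v' + qf Shg (v - v') / 2"
    and sol: "\<exists>xs ys. adjoint A xs + adjoint B ys = c \<and>
               (\<forall>u v. adjoint A u + adjoint B v = c \<longrightarrow>
                  p xs + ereal (f xs) + q ys + ereal (g ys) \<le> p u + ereal (f u) + q v + ereal (g v))"
    and \<sigma>: "\<sigma> > 0"
    and S: "self_adjoint S" and T: "self_adjoint T"
    and alg_x: "psd (\<lambda>u. Shf u + S u + \<sigma> *\<^sub>R A (adjoint A u))"
    and alg_y: "psd (\<lambda>v. Shg v + T v + \<sigma> *\<^sub>R B (adjoint B v))"
    and init: "x 0 \<in> edom p" "y 0 \<in> edom q"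
    and x_step: "\<And>k u. p (x (Suc k)) + ereal (gf (x k) \<bullet> x (Suc k)
                        + qf (\<lambda>w. Shf w + S w) (x (Suc k) - x k) / 2
                        + z k \<bullet> adjoint A (x (Suc k))
                        + \<sigma> / 2 * (norm (adjoint A (x (Suc k)) + adjoint B (y k) - c))\<^sup>2)
                   \<le> p u + ereal (gf (x k) \<bullet> u + qf (\<lambda>w. Shf w + S w) (u - x k) / 2
                        + z k \<bullet> adjoint A u
                        + \<sigma> / 2 * (norm (adjoint A u + adjoint B (y k) - c))\<^sup>2)"
    and y_step: "\<And>k v. q (y (Suc k)) + ereal (gg (y k) \<bullet> y (Suc k)
                        + qf (\<lambda>w. Shg w + T w) (y (Suc k) - y k) / 2
                        + z k \<bullet> adjoint B (y (Suc k))
                        + \<sigma> / 2 * (norm (adjoint A (x (Suc k)) + adjoint B (y (Suc k)) - c))\<^sup>2)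
                   \<le> q v + ereal (gg (y k) \<bullet> v + qf (\<lambda>w. Shg w + T w) (v - y k) / 2
                        + z k \<bullet> adjoint B v
                        + \<sigma> / 2 * (norm (adjoint A (x (Suc k)) + adjoint B v - c))\<^sup>2)"
    and z_step: "\<And>k. z (Suc k) = z k + (\<tau> * \<sigma>) *\<^sub>R
                        (adjoint A (x (Suc k)) + adjoint B (y (Suc k)) - c)"
    and \<tau>: "0 < \<tau>" "\<tau> < (1 + sqrt 5) / 2"
    and \<alpha>: "\<tau> / min (1 + \<tau>) (1 + 1 / \<tau>) < \<alpha>" "\<alpha> \<le> 1"
    and cond1: "psd (\<lambda>u. Shf u + S u)"
    and cond2: "pd (\<lambda>u. (1/2) *\<^sub>R Sf u + S u + ((1 - \<alpha>) * \<sigma> / 2) *\<^sub>R A (adjoint A u))"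
    and cond3: "psd (\<lambda>v. (1/2) *\<^sub>R Shg v + T v)"
    and cond4: "pd (\<lambda>v. (1/2) *\<^sub>R Sg v + T v
                     + (min \<tau> (1 + \<tau> - \<tau>\<^sup>2) * \<alpha> * \<sigma>) *\<^sub>R B (adjoint B v))"
  shows "((\<lambda>k. Min ((\<lambda>i. (infdist 0 ((\<lambda>v. v + gf (x (Suc i)) + A (z (Suc i))) ` subdiff p (x (Suc i))))\<^sup>2
                       + (infdist 0 ((\<lambda>w. w + gg (y (Suc i)) + B (z (Suc i))) ` subdiff q (y (Suc i))))\<^sup>2
                       + (norm (adjoint A (x (Suc i)) + adjoint B (y (Suc i)) - c))\<^sup>2) ` {1..k}))
           \<in> o(\<lambda>k. 1 / real k)) \<and>
    (\<forall>xb yb zb. 0 \<in> (\<lambda>v. v + gf xb + A zb) ` subdiff p xb \<and>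
                    0 \<in> (\<lambda>w. w + gg yb + B zb) ` subdiff q yb \<and>
                    adjoint A xb + adjoint B yb = c \<longrightarrow>
           (\<lambda>k. Min ((\<lambda>i. \<bar>(real_of_ereal (p (x i)) + f (x i) + real_of_ereal (q (y i)) + g (y i))
                             - (real_of_ereal (p xb) + f xb + real_of_ereal (q yb) + g yb)\<bar>) ` {1..k}))
           \<in> o(\<lambda>k. 1 / sqrt (real k)))"
proof -
  have pq: "proper_fun p" "convex_efun p" "proper_fun q" "convex_efun q"
    using p q by (simp_all add: closed_proper_convex_def)
  interpret majorized_ipadmm p q f g gf gg A B c Sf Shf S Sg Shg T \<sigma> \<tau> \<alpha> x y z
    by (rule majorized_ipadmm.intro) (fact pq f_maj g_maj gf_lip gg_lip A_lin B_lin Sf Shf Sg Shg S T \<sigma>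
        x_step y_step z_step \<tau>(1) \<alpha> cond1 cond2 cond3 cond4)+
  have kkt: "majorized_ipadmm_kkt p q f g gf gg A B c Sf Shf S Sg Shg T \<sigma> \<tau> \<alpha> x y z xb yb zb"
    if "0 \<in> (\<lambda>v. v + gf xb + A zb) ` subdiff p xb" "0 \<in> (\<lambda>w. w + gg yb + B zb) ` subdiff q yb"
      "adjoint A xb + adjoint B yb = c" for xb yb zb
    using that by (intro majorized_ipadmm_kkt.intro majorized_ipadmm_axioms majorized_ipadmm_kkt_axioms.intro)
  obtain xb yb zb where "0 \<in> (\<lambda>v. v + gf xb + A zb) ` subdiff p xb"
    "0 \<in> (\<lambda>w. w + gg yb + B zb) ` subdiff q yb" "adjoint A xb + adjoint B yb = c"
    using kkt_point_exists[OF pq(2) p_not_minf pq(4) q_not_minf f_conv f_maj(2) self_adjoint_linear[OF Shf(1)]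
        g_conv g_maj(2) self_adjoint_linear[OF Shg(1)] A_lin B_lin CQ sol] .
  then show ?thesis
    using majorized_ipadmm_kkt.kkt_residual_smallo[OF kkt] majorized_ipadmm_kkt.objective_gap_smallo[OF kkt]
    unfolding objective_def by blast
qed

end
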